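(* Let $G_n$ be any connected undirected graph on $n$ nodes with constant maximum degree ($\Delta=O(1)$) and diameter $D$, and let $k\le n$ initial messages be placed arbitrarily at the nodes. Then, with high probability, the stopping time of uniform algebraic gossip (with \texttt{EXCHANGE}) disseminating the $k$ messages is $\Theta(k+D)$ rounds in the synchronous time model and $O(k+D)$ rounds in the asynchronous time model.
   Context: Gossip setting: $G_n=(V,E)$ is a connected undirected graph, $|V|=n$; $N(v)$ is the neighbor set of $v$, $\Delta=\max_v|N(v)|$, $D$ the diameter. Asynchronous time model: in each timeslot one node, chosen independently and uniformly at random from $V$, acts; $n$ consecutive timeslots form one round. Synchronous time model: in each round every node acts; information received in a round is available for sending only from the next round on. An acting node chooses a single neighbor and performs \texttt{EXCHANGE}: both nodes send a message to each other. Uniform gossip: the partner is chosen uniformly at random from $N(v)$. Algebraic gossip (random linear network coding): there are $k\le n$ initial messages $x_1,\dots,x_k\in\mathbb{F}_q^r$ ($q\ge2$) located at nodes. Each node stores linear equations over $\mathbb{F}_q$ in the unknowns $x_1,\dots,x_k$; a node holding $x_i$ initially stores the equation for $x_i$. A sent message is a random linear combination of all stored equations of the sender with coefficients uniform in $\mathbb{F}_q$; a received equation is stored only if linearly independent of the stored ones. A node is done at rank $k$; the stopping time is the number of rounds until all nodes are done. "With high probability" means with probability at least $1-O(1/n)$. *)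

theory Defs
  imports "HOL-Probability.Probability"
begin

definition simple_graph :: "nat set \<Rightarrow> (nat \<Rightarrow> nat \<Rightarrow> bool) \<Rightarrow> bool" where
  "simple_graph V E \<longleftrightarrow> finite V \<and> (\<forall>u v. E u v \<longrightarrow> u \<in> V \<and> v \<in> V)
     \<and> (\<forall>u v. E u v \<longrightarrow> E v u) \<and> (\<forall>u. \<not> E u u)"

fun walk :: "(nat \<Rightarrow> nat \<Rightarrow> bool) \<Rightarrow> nat list \<Rightarrow> bool" where
  "walk E [] = False"
| "walk E [v] = True"
| "walk E (u # v # xs) = (E u v \<and> walk E (v # xs))"

definition connected_graph :: "nat set \<Rightarrow> (nat \<Rightarrow> nat \<Rightarrow> bool) \<Rightarrow> bool" where
  "connected_graph V E \<longleftrightarrow> (\<forall>u\<in>V. \<forall>v\<in>V. \<exists>xs. walk E xs \<and> hd xs = u \<and> last xs = v)"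

definition gdist :: "(nat \<Rightarrow> nat \<Rightarrow> bool) \<Rightarrow> nat \<Rightarrow> nat \<Rightarrow> nat" where
  "gdist E u v = (LEAST m. \<exists>xs. walk E xs \<and> hd xs = u \<and> last xs = v \<and> length xs = m + 1)"

definition diameter :: "nat set \<Rightarrow> (nat \<Rightarrow> nat \<Rightarrow> bool) \<Rightarrow> nat" where
  "diameter V E = Max {gdist E u v | u v. u \<in> V \<and> v \<in> V}"

definition nbrs :: "nat set \<Rightarrow> (nat \<Rightarrow> nat \<Rightarrow> bool) \<Rightarrow> nat \<Rightarrow> nat set" where
  "nbrs V E v = {u \<in> V. E v u}"

definition max_degree :: "nat set \<Rightarrow> (nat \<Rightarrow> nat \<Rightarrow> bool) \<Rightarrow> nat" where
  "max_degree V E = Max ((\<lambda>v. card (nbrs V E v)) ` V)"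

text \<open>An equation in the unknowns x_1..x_k is represented by its coefficient vector
  (coefficient of x_(i+1) at index i).  The right-hand sides (payloads in F_q^r) are
  determined by the coefficients and play no role for ranks and the stopping time.\<close>
type_synonym 'f eqn = "nat \<Rightarrow> 'f"
type_synonym 'f gstate = "nat \<Rightarrow> 'f eqn list"  \<comment> \<open>stored equations of each node\<close>

definition lincomb :: "'f::field list \<Rightarrow> 'f eqn list \<Rightarrow> 'f eqn" where
  "lincomb cs vs = (\<lambda>j. \<Sum>i<length vs. cs ! i * (vs ! i) j)"

definition in_span :: "'f::field eqn \<Rightarrow> 'f eqn list \<Rightarrow> bool" where
  "in_span w vs \<longleftrightarrow> (\<exists>cs. length cs = length vs \<and> w = lincomb cs vs)"

definition rand_comb :: "'f::{field,finite} eqn list \<Rightarrow> 'f eqn pmf" where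
  "rand_comb vs = map_pmf (\<lambda>cs. lincomb cs vs) (pmf_of_set {cs. length cs = length vs})"

definition receive :: "'f::field eqn list \<Rightarrow> 'f eqn \<Rightarrow> 'f eqn list" where
  "receive vs w = (if in_span w vs then vs else vs @ [w])"

text \<open>rank of a node = number of stored (linearly independent) equations\<close>
definition all_done :: "nat set \<Rightarrow> nat \<Rightarrow> 'f gstate \<Rightarrow> bool" where
  "all_done V k s \<longleftrightarrow> (\<forall>v\<in>V. length (s v) = k)"

definition unit_eqn :: "nat \<Rightarrow> 'f::field eqn" where
  "unit_eqn i = (\<lambda>j. if j = i then 1 else 0)"

text \<open>message i (0 \<le> i < k) is initially located at node loc i\<close>
definition init_state :: "(nat \<Rightarrow> nat) \<Rightarrow> nat \<Rightarrow> 'f::field gstate" where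
  "init_state loc k = (\<lambda>v. map unit_eqn (filter (\<lambda>i. loc i = v) [0..<k]))"

definition exchange :: "'f::{field,finite} gstate \<Rightarrow> nat \<Rightarrow> nat \<Rightarrow> 'f gstate pmf" where
  "exchange s v u =
     do { mv \<leftarrow> rand_comb (s v); mu \<leftarrow> rand_comb (s u);
          return_pmf (s(v := receive (s v) mu, u := receive (s u) mv)) }"

text \<open>asynchronous model: one timeslot (uniformly random acting node, uniform partner)\<close>
definition async_step :: "nat set \<Rightarrow> (nat \<Rightarrow> nat \<Rightarrow> bool) \<Rightarrow> 'f::{field,finite} gstate \<Rightarrow> 'f gstate pmf" where
  "async_step V E s =
     do { v \<leftarrow> pmf_of_set V;
          if nbrs V E v = {} then return_pmf s
          else do { u \<leftarrow> pmf_of_set (nbrs V E v); exchange s v u } }"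

text \<open>synchronous model: every node chooses a partner; all messages of the round are
  computed from the state at the start of the round (each one an independent random
  combination), and then delivered.\<close>
fun draw_msgs :: "'f::{field,finite} gstate \<Rightarrow> (nat \<times> nat) list \<Rightarrow> (nat \<times> 'f eqn) list pmf" where
  "draw_msgs s [] = return_pmf []"
| "draw_msgs s ((a, b) # ps) =
     do { m \<leftarrow> rand_comb (s a); ms \<leftarrow> draw_msgs s ps; return_pmf ((b, m) # ms) }"

definition deliver :: "'f::field gstate \<Rightarrow> (nat \<times> 'f eqn) list \<Rightarrow> 'f gstate" where
  "deliver s ms = fold (\<lambda>(b, m) t. t(b := receive (t b) m)) ms s"

definition partner_pmf :: "nat set \<Rightarrow> (nat \<Rightarrow> nat \<Rightarrow> bool) \<Rightarrow> nat \<Rightarrow> nat pmf" where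
  "partner_pmf V E v = (if nbrs V E v = {} then return_pmf v else pmf_of_set (nbrs V E v))"

definition sync_round :: "nat set \<Rightarrow> (nat \<Rightarrow> nat \<Rightarrow> bool) \<Rightarrow> 'f::{field,finite} gstate \<Rightarrow> 'f gstate pmf" where
  "sync_round V E s =
     do { p \<leftarrow> Pi_pmf V 0 (partner_pmf V E);
          ms \<leftarrow> draw_msgs s (concat (map (\<lambda>v. if nbrs V E v = {} then [] else [(v, p v), (p v, v)])
                                         (sorted_list_of_set V)));
          return_pmf (deliver s ms) }"

text \<open>trajectory of m steps: list of the m+1 states s_0, ..., s_m\<close>
fun traj :: "('s \<Rightarrow> 's pmf) \<Rightarrow> 's \<Rightarrow> nat \<Rightarrow> 's list pmf" where
  "traj step s0 0 = return_pmf [s0]"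
| "traj step s0 (Suc m) = do { xs \<leftarrow> traj step s0 m; s' \<leftarrow> step (last xs); return_pmf (xs @ [s']) }"

end

theory Submission
  imports Defs
begin

text \<open>
  Following Haeupler's projection analysis of network coding gossip, a node knows a vector
  \<mu> \<in> F_q^k if one of its stored equations has nonzero inner product with \<mu>. A node has
  full rank iff it knows every nonzero \<mu>. Knowledge is never lost, and a node that knows \<mu>
  makes a neighbour know \<mu> with probability at least (1 - 1/q)/\<Delta> per synchronous round
  (divided by n per asynchronous timeslot), because a random combination of its equations is
  orthogonal to \<mu> with probability at most 1/q. Along a shortest path of length at most D,
  knowledge of a fixed \<mu> therefore reaches a fixed node within O(k + D) rounds except with
  probability q^(-k) (\<Delta> + 1)^(-2D), and a union bound over the fewer than q^k vectors and the
  n \<le> (\<Delta> + 1)^D nodes bounds the failure probability by O(1/n).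

  The lower bound holds deterministically: a node receives at most \<Delta> + 1 equations per
  synchronous round, and after i rounds the unknown x_j can occur only in equations stored
  within distance i of the node that initially held x_j.
\<close>

section \<open>Linear algebra of stored equations\<close>

definition dot :: "nat \<Rightarrow> 'f::field eqn \<Rightarrow> 'f eqn \<Rightarrow> 'f" where
  "dot k \<mu> w = (\<Sum>j<k. \<mu> j * w j)"

definition knows :: "nat \<Rightarrow> 'f::field eqn \<Rightarrow> 'f eqn list \<Rightarrow> bool" where
  "knows k \<mu> vs \<longleftrightarrow> (\<exists>w\<in>set vs. dot k \<mu> w \<noteq> 0)"

definition supported_on :: "nat set \<Rightarrow> 'f::zero eqn set" where
  "supported_on I = {w. \<forall>j. j \<notin> I \<longrightarrow> w j = 0}"

definition lin_indep :: "'f::field eqn list \<Rightarrow> bool" where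
  "lin_indep vs \<longleftrightarrow> inj_on (\<lambda>cs. lincomb cs vs) {cs. length cs = length vs}"

lemma two_le_card_field: "2 \<le> CARD('f::{field,finite})"
proof -
  have "card {0::'f, 1} \<le> CARD('f)" by (rule card_mono) auto
  then show ?thesis by simp
qed

lemma finite_lists_of_length: "finite {cs :: ('f::finite) list. length cs = m}"
  using finite_lists_length_eq[of "UNIV :: 'f set" m] by simp

lemma card_lists_of_length: "card {cs :: ('f::finite) list. length cs = m} = CARD('f) ^ m"
  using card_lists_length_eq[of "UNIV :: 'f set" m] by simp

lemma lincomb_snoc:
  "length cs = length vs \<Longrightarrow> lincomb (cs @ [c]) (vs @ [w]) = (\<lambda>j. lincomb cs vs j + c * w j)"
  by (auto simp: lincomb_def nth_append intro!: sum.cong)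

lemma lincomb_supported_on: "set vs \<subseteq> supported_on I \<Longrightarrow> lincomb cs vs \<in> supported_on I"
  by (auto simp: supported_on_def lincomb_def subset_iff intro!: sum.neutral)

lemma lincomb_nonzero_coord: "lincomb cs vs j \<noteq> 0 \<Longrightarrow> \<exists>w\<in>set vs. w j \<noteq> (0::'f::field)"
proof -
  assume "lincomb cs vs j \<noteq> 0"
  then obtain i where "i < length vs" "cs ! i * (vs ! i) j \<noteq> 0"
    unfolding lincomb_def by (meson sum.neutral lessThan_iff)
  then show ?thesis by (auto intro: bexI[of _ "vs ! i"])
qed

lemma dot_lincomb: "dot k \<mu> (lincomb cs vs) = (\<Sum>i<length vs. cs ! i * dot k \<mu> (vs ! i))"
  unfolding dot_def lincomb_def
  by (simp add: sum_distrib_left sum_distrib_right mult_ac sum.swap[of _ "{..<k}"])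

lemma knows_mono: "knows k \<mu> vs \<Longrightarrow> set vs \<subseteq> set ws \<Longrightarrow> knows k \<mu> ws"
  by (auto simp: knows_def)

lemma knows_lincomb: "dot k \<mu> (lincomb cs vs) \<noteq> 0 \<Longrightarrow> knows k \<mu> vs"
  by (auto simp: dot_lincomb knows_def intro: sum.neutral)

lemma knows_receive: "dot k \<mu> w \<noteq> 0 \<Longrightarrow> knows k \<mu> (receive vs w)"
  by (auto simp: receive_def in_span_def knows_def dest: knows_lincomb)

lemma length_receive: "length (receive vs w) \<le> Suc (length vs)"
  by (simp add: receive_def)

lemma lin_indep_snoc:
  assumes indep: "lin_indep vs" and w: "\<not> in_span w vs"
  shows "lin_indep (vs @ [w])"
  unfolding lin_indep_def
proof (rule inj_onI)
  fix cs1 cs2 assume c1: "cs1 \<in> {cs. length cs = length (vs @ [w])}"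
    and c2: "cs2 \<in> {cs. length cs = length (vs @ [w])}"
    and eq: "lincomb cs1 (vs @ [w]) = lincomb cs2 (vs @ [w])"
  obtain a c where a: "cs1 = a @ [c]" "length a = length vs"
    using c1 by (cases cs1 rule: rev_cases) auto
  obtain b c' where b: "cs2 = b @ [c']" "length b = length vs"
    using c2 by (cases cs2 rule: rev_cases) auto
  have eqj: "\<And>j. lincomb a vs j + c * w j = lincomb b vs j + c' * w j"
    using eq a b by (simp add: lincomb_snoc fun_eq_iff)
  have "c = c'" \<comment> \<open>otherwise w would be a combination of vs\<close>
  proof (rule ccontr)
    assume "c \<noteq> c'"
    define ds where "ds = map (\<lambda>i. (b ! i - a ! i) / (c - c')) [0..<length vs]"
    have "w j = lincomb ds vs j" for j
    proof -
      have "(c - c') * w j = lincomb b vs j - lincomb a vs j"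
        using eqj[of j] by (simp add: algebra_simps)
      also have "\<dots> = (\<Sum>i<length vs. (b ! i - a ! i) * (vs ! i) j)"
        by (simp add: lincomb_def sum_subtractf[symmetric] algebra_simps)
      finally have "(c - c') * w j = (\<Sum>i<length vs. (b ! i - a ! i) * (vs ! i) j)" .
      then have "w j = (\<Sum>i<length vs. (b ! i - a ! i) * (vs ! i) j) / (c - c')"
        using \<open>c \<noteq> c'\<close> by (simp add: field_simps)
      then show ?thesis by (simp add: lincomb_def ds_def sum_divide_distrib)
    qed
    then have "in_span w vs" unfolding in_span_def by (intro exI[of _ ds]) (auto simp: ds_def)
    with w show False ..
  qed
  then have "lincomb a vs = lincomb b vs" using eqj by (auto simp: fun_eq_iff)
  then have "a = b" using indep a b by (auto simp: lin_indep_def inj_on_def)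
  then show "cs1 = cs2" using a b \<open>c = c'\<close> by simp
qed

lemma bij_betw_restrict_supported_on:
  "bij_betw (\<lambda>w. restrict w I) (supported_on I :: 'f::zero eqn set) (PiE I (\<lambda>_. UNIV))"
proof (rule bij_betw_imageI)
  show "inj_on (\<lambda>w. restrict w I) (supported_on I :: 'f eqn set)"
    by (rule inj_onI) (simp add: supported_on_def fun_eq_iff restrict_def split: if_splits; metis)
  show "(\<lambda>w. restrict w I) ` (supported_on I :: 'f eqn set) = PiE I (\<lambda>_. UNIV)"
  proof (intro equalityI subsetI)
    fix g :: "nat \<Rightarrow> 'f" assume g: "g \<in> PiE I (\<lambda>_. UNIV)"
    have "g = restrict (\<lambda>j. if j \<in> I then g j else 0) I"
      using g by (auto simp: fun_eq_iff PiE_def extensional_def)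
    moreover have "(\<lambda>j. if j \<in> I then g j else 0) \<in> supported_on I" by (auto simp: supported_on_def)
    ultimately show "g \<in> (\<lambda>w. restrict w I) ` supported_on I" by blast
  qed auto
qed

lemma finite_supported_on:
  assumes "finite I" shows "finite (supported_on I :: ('f::{zero,finite}) eqn set)"
proof -
  have "finite (PiE I (\<lambda>_. UNIV :: 'f set))" using assms by (simp add: finite_PiE)
  then show ?thesis using bij_betw_finite[OF bij_betw_restrict_supported_on] by blast
qed

lemma card_supported_on:
  assumes "finite I" shows "card (supported_on I :: ('f::{zero,finite}) eqn set) = CARD('f) ^ card I"
proof -
  have "card (supported_on I :: 'f eqn set) = card (PiE I (\<lambda>_. UNIV :: 'f set))"
    by (rule bij_betw_same_card[OF bij_betw_restrict_supported_on])
  then show ?thesis using assms by (simp add: card_PiE)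
qed

lemma length_le_card_if_lin_indep:
  assumes "lin_indep (vs :: ('f::{field,finite}) eqn list)" "set vs \<subseteq> supported_on I" "finite I"
  shows "length vs \<le> card I"
proof -
  have "inj_on (\<lambda>cs. lincomb cs vs) {cs. length cs = length vs}" using assms by (simp add: lin_indep_def)
  moreover have "(\<lambda>cs. lincomb cs vs) ` {cs. length cs = length vs} \<subseteq> supported_on I"
    using lincomb_supported_on[OF assms(2)] by auto
  ultimately have "card {cs :: 'f list. length cs = length vs} \<le> card (supported_on I :: 'f eqn set)"
    using card_inj_on_le finite_supported_on[OF assms(3)] by blast
  then have "CARD('f) ^ length vs \<le> CARD('f) ^ card I"
    by (simp add: card_lists_of_length card_supported_on[OF assms(3)])
  moreover have "1 < CARD('f)" using two_le_card_field[where 'f='f] by simp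
  ultimately show ?thesis using power_le_imp_le_exp by blast
qed

lemma exists_nonzero_not_known:
  assumes "length (vs :: ('f::{field,finite}) eqn list) < k"
  shows "\<exists>\<mu>\<in>supported_on {..<k}. (\<exists>j<k. \<mu> j \<noteq> 0) \<and> \<not> knows k \<mu> vs"
proof -
  let ?dots = "\<lambda>\<mu>. map (dot k \<mu>) vs"
  have "\<not> inj_on ?dots (supported_on {..<k})"
  proof
    assume inj: "inj_on ?dots (supported_on {..<k})"
    have "?dots ` supported_on {..<k} \<subseteq> {cs. length cs = length vs}" by auto
    then have "card (supported_on {..<k} :: 'f eqn set) \<le> card {cs :: 'f list. length cs = length vs}"
      using card_inj_on_le[OF inj] finite_lists_of_length by blast
    then have "CARD('f) ^ k \<le> CARD('f) ^ length vs"
      by (simp add: card_lists_of_length card_supported_on)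
    moreover have "1 < CARD('f)" using two_le_card_field[where 'f='f] by simp
    ultimately show False using assms power_le_imp_le_exp by fastforce
  qed
  then obtain m1 m2 where m: "m1 \<in> supported_on {..<k}" "m2 \<in> supported_on {..<k}" "m1 \<noteq> m2"
    "?dots m1 = ?dots m2"
    by (auto simp: inj_on_def)
  define \<mu> where "\<mu> = (\<lambda>j. m1 j - m2 j)"
  have "\<mu> \<in> supported_on {..<k}" using m by (auto simp: supported_on_def \<mu>_def)
  moreover have "\<exists>j<k. \<mu> j \<noteq> 0"
    using m(1-3) by (auto simp: supported_on_def \<mu>_def fun_eq_iff) (metis not_less)
  moreover have "dot k \<mu> w = dot k m1 w - dot k m2 w" for w
    by (simp add: dot_def \<mu>_def sum_subtractf[symmetric] algebra_simps)
  then have "\<not> knows k \<mu> vs"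
    using m(4) by (auto simp: knows_def map_eq_conv)
  ultimately show ?thesis by blast
qed

section \<open>Iterated random steps\<close>

fun iter_pmf :: "('s \<Rightarrow> 's pmf) \<Rightarrow> 's \<Rightarrow> nat \<Rightarrow> 's pmf" where
  "iter_pmf step s0 0 = return_pmf s0"
| "iter_pmf step s0 (Suc m) = bind_pmf (iter_pmf step s0 m) step"

lemma map_pmf_last_traj: "map_pmf last (traj step s0 m) = iter_pmf step s0 m"
proof (induction m)
  case (Suc m)
  have "map_pmf last (traj step s0 (Suc m)) = bind_pmf (map_pmf last (traj step s0 m)) step"
    by (simp add: map_bind_pmf bind_return_pmf' bind_map_pmf)
  then show ?case using Suc by simp
qed simp

lemma set_pmf_traj:
  "xs \<in> set_pmf (traj step s0 m) \<Longrightarrow>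
     length xs = Suc m \<and> xs ! 0 = s0 \<and> (\<forall>i<m. xs ! Suc i \<in> set_pmf (step (xs ! i)))"
proof (induction m arbitrary: xs)
  case (Suc m)
  then obtain ys s' where ys: "ys \<in> set_pmf (traj step s0 m)" "s' \<in> set_pmf (step (last ys))"
    "xs = ys @ [s']" by auto
  have IH: "length ys = Suc m" "ys ! 0 = s0" "\<forall>i<m. ys ! Suc i \<in> set_pmf (step (ys ! i))"
    using Suc.IH[OF ys(1)] by auto
  have "last ys = ys ! m" using IH(1) by (metis diff_Suc_1 last_conv_nth list.size(3) nat.distinct(1))
  show ?case
  proof (intro conjI allI impI)
    show "length xs = Suc (Suc m)" "xs ! 0 = s0" using ys IH by (simp_all add: nth_append)
    fix i assume "i < Suc m"
    then consider "i < m" | "i = m" by linarith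
    then show "xs ! Suc i \<in> set_pmf (step (xs ! i))"
      by cases (use IH ys \<open>last ys = ys ! m\<close> in \<open>simp_all add: nth_append\<close>)
  qed
qed simp

lemma traj_nth_invariant:
  assumes "P 0 s0" "\<And>i s s'. P i s \<Longrightarrow> s' \<in> set_pmf (step s) \<Longrightarrow> P (Suc i) s'"
    and "xs \<in> set_pmf (traj step s0 m)" "i < length xs"
  shows "P i (xs ! i)"
  using assms(4)
proof (induction i)
  case 0 then show ?case using set_pmf_traj[OF assms(3)] assms(1) by simp
next
  case (Suc i) then show ?case using set_pmf_traj[OF assms(3)] assms(2) by auto
qed

lemma set_pmf_iter_pmf_subset:
  "s0 \<in> R \<Longrightarrow> (\<And>s. s \<in> R \<Longrightarrow> set_pmf (step s) \<subseteq> R) \<Longrightarrow> set_pmf (iter_pmf step s0 m) \<subseteq> R"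
  by (induction m) auto

lemma nn_integral_iter_pmf_le:
  fixes f :: "'s \<Rightarrow> ennreal"
  assumes s0: "s0 \<in> R" and closed: "\<And>s. s \<in> R \<Longrightarrow> set_pmf (step s) \<subseteq> R"
    and drift: "\<And>s. s \<in> R \<Longrightarrow> (\<integral>\<^sup>+x. f x \<partial>measure_pmf (step s)) \<le> \<beta> * f s"
  shows "(\<integral>\<^sup>+x. f x \<partial>measure_pmf (iter_pmf step s0 m)) \<le> \<beta> ^ m * f s0"
proof (induction m)
  note reachable = set_pmf_iter_pmf_subset[of s0 R step, OF s0 closed]
  case (Suc m)
  have "(\<integral>\<^sup>+x. f x \<partial>measure_pmf (iter_pmf step s0 (Suc m)))
      = (\<integral>\<^sup>+x. (\<integral>\<^sup>+y. f y \<partial>measure_pmf (step x)) \<partial>measure_pmf (iter_pmf step s0 m))" by simp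
  also have "\<dots> \<le> (\<integral>\<^sup>+x. \<beta> * f x \<partial>measure_pmf (iter_pmf step s0 m))"
    using reachable drift by (intro nn_integral_mono_AE) (auto simp: AE_measure_pmf_iff)
  also have "\<dots> = \<beta> * (\<integral>\<^sup>+x. f x \<partial>measure_pmf (iter_pmf step s0 m))"
    by (rule nn_integral_cmult) simp
  also have "\<dots> \<le> \<beta> * (\<beta> ^ m * f s0)" using Suc by (intro mult_left_mono) auto
  finally show ?case by (simp add: mult_ac)
qed simp

lemma prob_mono_on_support:
  "(\<And>x. x \<in> set_pmf M \<Longrightarrow> x \<in> B \<Longrightarrow> x \<in> A) \<Longrightarrow> measure_pmf.prob M B \<le> measure_pmf.prob M A"
  by (rule measure_pmf.finite_measure_mono_AE) (auto simp: AE_measure_pmf_iff)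

lemma prob_Collect_not: "measure_pmf.prob M {x. \<not> P x} = 1 - measure_pmf.prob M {x. P x}"
  using measure_pmf.prob_compl[of "{x. P x}" M] by (simp add: Compl_eq_Diff_UNIV[symmetric] Collect_neg_eq)

lemma prob_bind_pmf_ge:
  assumes c: "0 \<le> c" and h: "\<And>x. x \<in> set_pmf M \<Longrightarrow> x \<in> B \<Longrightarrow> c \<le> measure_pmf.prob (N x) A"
  shows "measure_pmf.prob M B * c \<le> measure_pmf.prob (bind_pmf M N) A"
proof -
  have "ennreal (measure_pmf.prob M B * c) = (\<integral>\<^sup>+x. ennreal c * indicator B x \<partial>measure_pmf M)"
    using c by (simp add: nn_integral_cmult_indicator measure_pmf.emeasure_eq_measure ennreal_mult mult_ac)
  also have "\<dots> \<le> (\<integral>\<^sup>+x. emeasure (measure_pmf (N x)) A \<partial>measure_pmf M)"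
    using h by (intro nn_integral_mono_AE)
      (auto simp: AE_measure_pmf_iff measure_pmf.emeasure_eq_measure indicator_def)
  also have "\<dots> = emeasure (measure_pmf (bind_pmf M N)) A" by simp
  finally show ?thesis using c by (simp add: measure_pmf.emeasure_eq_measure)
qed

lemma prob_traj_reaches_ge:
  "1 - measure_pmf.prob (iter_pmf step s0 m) {s. \<not> P s}
     \<le> measure_pmf.prob (traj step s0 m) {xs. \<exists>i<length xs. P (xs ! i)}"
proof -
  have "measure_pmf.prob (iter_pmf step s0 m) {s. \<not> P s}
      = measure_pmf.prob (traj step s0 m) {xs. \<not> P (last xs)}"
    by (simp add: map_pmf_last_traj[symmetric] vimage_def)
  then have "1 - measure_pmf.prob (iter_pmf step s0 m) {s. \<not> P s}
      = measure_pmf.prob (traj step s0 m) {xs. P (last xs)}"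
    using prob_Collect_not[of "traj step s0 m" "\<lambda>xs. P (last xs)"] by simp
  also have "\<dots> \<le> measure_pmf.prob (traj step s0 m) {xs. \<exists>i<length xs. P (xs ! i)}"
  proof (rule prob_mono_on_support)
    fix xs assume xs: "xs \<in> set_pmf (traj step s0 m)" "xs \<in> {xs. P (last xs)}"
    have "length xs = Suc m" using set_pmf_traj[OF xs(1)] by simp
    then have "last xs = xs ! m" by (metis diff_Suc_1 last_conv_nth list.size(3) nat.distinct(1))
    then show "xs \<in> {xs. \<exists>i<length xs. P (xs ! i)}" using xs(2) \<open>length xs = Suc m\<close> by auto
  qed
  finally show ?thesis .
qed

lemma nn_integral_le_if_prob_ge:
  fixes f :: "'s \<Rightarrow> ennreal"
  assumes A: "0 \<le> A" and f: "\<And>x. x \<in> set_pmf M \<Longrightarrow> f x \<le> ennreal (if K x then A / 2 else A)"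
    and p: "p \<le> measure_pmf.prob M {x. K x}"
  shows "(\<integral>\<^sup>+x. f x \<partial>measure_pmf M) \<le> ennreal ((1 - p / 2) * A)"
proof -
  have "(\<integral>\<^sup>+x. f x \<partial>measure_pmf M)
      \<le> (\<integral>\<^sup>+x. ennreal (A / 2) + ennreal (A / 2) * indicator {x. \<not> K x} x \<partial>measure_pmf M)"
  proof (rule nn_integral_mono_AE, unfold AE_measure_pmf_iff, intro ballI)
    fix x assume "x \<in> set_pmf M"
    then have "f x \<le> ennreal (if K x then A / 2 else A)" by (rule f)
    also have "\<dots> = ennreal (A / 2) + ennreal (A / 2) * indicator {x. \<not> K x} x"
      using A by (auto simp: ennreal_plus[symmetric] simp del: ennreal_plus)
    finally show "f x \<le> ennreal (A / 2) + ennreal (A / 2) * indicator {x. \<not> K x} x" .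
  qed
  also have "\<dots> = ennreal (A / 2) + ennreal (A / 2) * ennreal (1 - measure_pmf.prob M {x. K x})"
    using prob_Collect_not[of M K]
    by (subst nn_integral_add) (auto simp: nn_integral_cmult_indicator measure_pmf.emeasure_eq_measure)
  also have "\<dots> = ennreal (A / 2 + A / 2 * (1 - measure_pmf.prob M {x. K x}))"
    using A measure_pmf.prob_le_1[of M "{x. K x}"]
    by (simp add: ennreal_mult[symmetric] ennreal_plus[symmetric] del: ennreal_plus)
  also have "\<dots> \<le> ennreal ((1 - p / 2) * A)"
    using A p by (intro ennreal_leI) (simp add: algebra_simps mult_left_mono)
  finally show ?thesis .
qed

definition stage :: "nat \<Rightarrow> (nat \<Rightarrow> 's \<Rightarrow> bool) \<Rightarrow> 's \<Rightarrow> nat" where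
  "stage d Q s = (GREATEST j. j \<le> d \<and> Q j s)"

text \<open>Reaching one more stage halves the potential, so every step multiplies its expectation
  by at most 1 - p/2.\<close>
definition stage_potential :: "nat \<Rightarrow> (nat \<Rightarrow> 's \<Rightarrow> bool) \<Rightarrow> 's \<Rightarrow> real" where
  "stage_potential d Q s = (if Q d s then 0 else 2 ^ (d - stage d Q s))"

lemma stage_reached: "Q 0 s \<Longrightarrow> stage d Q s \<le> d \<and> Q (stage d Q s) s"
  unfolding stage_def by (rule GreatestI_nat[where k=0]) auto

lemma le_stage: "j \<le> d \<Longrightarrow> Q j s \<Longrightarrow> j \<le> stage d Q s"
  unfolding stage_def by (rule Greatest_le_nat[where b=d]) auto

lemma stage_potential_le: "stage_potential d Q s \<le> 2 ^ d"
  by (simp add: stage_potential_def)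

lemma nn_integral_stage_potential_le:
  assumes persist: "\<And>j s'. Q j s \<Longrightarrow> s' \<in> set_pmf M \<Longrightarrow> Q j s'"
    and advance: "\<And>j. j < d \<Longrightarrow> Q j s \<Longrightarrow> p \<le> measure_pmf.prob M {s'. Q (Suc j) s'}"
    and start: "Q 0 s" and p: "0 \<le> p" "p \<le> 1"
  shows "(\<integral>\<^sup>+s'. stage_potential d Q s' \<partial>measure_pmf M) \<le> ennreal (1 - p / 2) * stage_potential d Q s"
proof (cases "Q d s")
  case True
  then have "(\<integral>\<^sup>+s'. stage_potential d Q s' \<partial>measure_pmf M) = (\<integral>\<^sup>+s'. 0 \<partial>measure_pmf M)"
    using persist by (intro nn_integral_cong_AE) (auto simp: AE_measure_pmf_iff stage_potential_def)
  then show ?thesis by simp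
next
  case False
  define j where "j = stage d Q s"
  have j: "j < d" "Q j s" using stage_reached[of Q s d, OF start] False by (auto simp: j_def le_less)
  define A where "A = (2::real) ^ (d - j)"
  have "ennreal (stage_potential d Q s') \<le> ennreal (if Q (Suc j) s' then A / 2 else A)"
    if s': "s' \<in> set_pmf M" for s'
  proof (cases "Q d s'")
    case False
    have "j \<le> stage d Q s'" using j persist[OF _ s'] by (intro le_stage) auto
    have "d - j = Suc (d - Suc j)" using j(1) by simp
    then have half: "A / 2 = 2 ^ (d - Suc j)" by (simp add: A_def)
    have "(2::real) ^ (d - stage d Q s') \<le> (if Q (Suc j) s' then A / 2 else A)"
    proof (cases "Q (Suc j) s'")
      case True
      then have "Suc j \<le> stage d Q s'" using j by (intro le_stage) auto
      then show ?thesis unfolding if_P[OF True] half by (intro power_increasing) auto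
    qed (use \<open>j \<le> stage d Q s'\<close> in \<open>auto simp: A_def intro: power_increasing\<close>)
    then show ?thesis using False by (simp add: stage_potential_def ennreal_leI del: if_split)
  qed (simp add: stage_potential_def A_def)
  then have "(\<integral>\<^sup>+s'. stage_potential d Q s' \<partial>measure_pmf M) \<le> ennreal ((1 - p / 2) * A)"
    using advance[OF j] by (intro nn_integral_le_if_prob_ge) (simp_all add: A_def)
  also have "\<dots> = ennreal (1 - p / 2) * stage_potential d Q s"
    using p False by (simp add: ennreal_mult stage_potential_def A_def j_def)
  finally show ?thesis .
qed

lemma prob_stage_not_reached_le:
  assumes persist: "\<And>j s s'. Q j s \<Longrightarrow> s' \<in> set_pmf (step s) \<Longrightarrow> Q j s'"
    and advance: "\<And>j s. j < d \<Longrightarrow> Q j s \<Longrightarrow> p \<le> measure_pmf.prob (step s) {s'. Q (Suc j) s'}"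
    and start: "Q 0 init" and p: "0 \<le> p" "p \<le> 1"
  shows "measure_pmf.prob (iter_pmf step init m) {s. \<not> Q d s} \<le> (1 - p / 2) ^ m * 2 ^ d"
proof -
  let ?M = "measure_pmf (iter_pmf step init m)"
  have "emeasure ?M {s. \<not> Q d s} = (\<integral>\<^sup>+s. indicator {s. \<not> Q d s} s \<partial>?M)" by simp
  also have "\<dots> \<le> (\<integral>\<^sup>+s. stage_potential d Q s \<partial>?M)"
    by (intro nn_integral_mono) (auto simp: stage_potential_def indicator_def)
  also have "\<dots> \<le> ennreal (1 - p / 2) ^ m * stage_potential d Q init"
    using persist start p
    by (intro nn_integral_iter_pmf_le[where R="{s. Q 0 s}"] nn_integral_stage_potential_le advance) auto
  also have "\<dots> \<le> ennreal (1 - p / 2) ^ m * ennreal (2 ^ d)"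
    by (intro mult_left_mono ennreal_leI stage_potential_le) simp
  also have "\<dots> = ennreal ((1 - p / 2) ^ m * 2 ^ d)"
    using p by (simp add: ennreal_mult ennreal_power)
  finally show ?thesis
    using p by (simp add: measure_pmf.emeasure_eq_measure)
qed

lemma set_pmf_rand_comb:
  "set_pmf (rand_comb (vs :: ('f::{field,finite}) eqn list))
     = (\<lambda>cs. lincomb cs vs) ` {cs. length cs = length vs}"
proof -
  have "{cs :: 'f list. length cs = length vs} \<noteq> {}" by (auto intro: exI[of _ "replicate (length vs) 0"])
  then show ?thesis using finite_lists_of_length[where 'f='f] by (simp add: rand_comb_def)
qed

lemma rand_comb_supported_on:
  "set vs \<subseteq> supported_on I \<Longrightarrow> w \<in> set_pmf (rand_comb (vs :: ('f::{field,finite}) eqn list)) \<Longrightarrow>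
     w \<in> supported_on I"
  by (auto simp: set_pmf_rand_comb lincomb_supported_on)

text \<open>Shifting coordinate i0 of a zero of the form by c changes its value to c * a i0, so the
  shifts of the zeros by all c are pairwise distinct lists.\<close>
lemma card_zeros_of_linear_form:
  fixes a :: "nat \<Rightarrow> 'f::{field,finite}"
  assumes i0: "i0 < m" "a i0 \<noteq> 0"
  shows "card {cs. length cs = m \<and> (\<Sum>i<m. cs ! i * a i) = 0} * CARD('f) \<le> CARD('f) ^ m"
proof -
  define L where "L cs = (\<Sum>i<m. cs ! i * a i)" for cs
  let ?Z = "{cs. length cs = m \<and> L cs = 0}"
  define shift :: "'f list \<times> 'f \<Rightarrow> 'f list" where "shift = (\<lambda>(cs, c). cs[i0 := cs ! i0 + c])"
  have L_shift: "L (shift (cs, c)) = c * a i0" if "cs \<in> ?Z" for cs c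
  proof -
    have "L (shift (cs, c)) = (\<Sum>i<m. cs ! i * a i + (if i = i0 then c * a i0 else 0))"
      unfolding L_def shift_def using that by (intro sum.cong) (auto simp: nth_list_update algebra_simps)
    also have "\<dots> = c * a i0" using that i0 by (simp add: sum.distrib L_def)
    finally show ?thesis .
  qed
  have "inj_on shift (?Z \<times> UNIV)"
  proof (rule inj_onI)
    fix x y assume "x \<in> ?Z \<times> UNIV" "y \<in> ?Z \<times> UNIV" and eq: "shift x = shift y"
    then obtain cs1 c1 cs2 c2 where xy: "x = (cs1, c1)" "y = (cs2, c2)" and Z: "cs1 \<in> ?Z" "cs2 \<in> ?Z"
      by auto
    note eq = eq[unfolded xy]
    have "c1 = c2" using L_shift[OF Z(1), of c1] L_shift[OF Z(2), of c2] eq i0 by simp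
    have "cs1 ! j = cs2 ! j" if "j < m" for j
      using arg_cong[where f="\<lambda>xs. xs ! j", OF eq] Z that \<open>c1 = c2\<close>
      by (cases "j = i0") (auto simp: shift_def nth_list_update)
    then show "x = y" using xy Z \<open>c1 = c2\<close> by (auto intro: nth_equalityI)
  qed
  moreover have "shift ` (?Z \<times> UNIV) \<subseteq> {cs. length cs = m}" by (auto simp: shift_def)
  ultimately have "card (?Z \<times> (UNIV :: 'f set)) \<le> card {cs :: 'f list. length cs = m}"
    using card_inj_on_le finite_lists_of_length by blast
  then show ?thesis by (simp add: card_cartesian_product card_lists_of_length L_def)
qed

lemma prob_rand_comb_knows_ge:
  assumes "knows k \<mu> (vs :: ('f::{field,finite}) eqn list)"
  shows "1 - 1 / real CARD('f) \<le> measure_pmf.prob (rand_comb vs) {w. dot k \<mu> w \<noteq> 0}"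
proof -
  let ?m = "length vs"
  define a where "a i = dot k \<mu> (vs ! i)" for i
  obtain i0 where i0: "i0 < ?m" "a i0 \<noteq> 0"
    using assms by (auto simp: knows_def a_def in_set_conv_nth)
  let ?L = "{cs :: 'f list. length cs = ?m}"
  let ?Z = "{cs. length cs = ?m \<and> (\<Sum>i<?m. cs ! i * a i) = 0}"
  have "measure_pmf.prob (rand_comb vs) {w. dot k \<mu> w = 0} = card ?Z / card ?L"
    unfolding rand_comb_def measure_map_pmf using finite_lists_of_length[where 'f='f and m="?m"]
    by (subst measure_pmf_of_set) (auto simp: dot_lincomb a_def vimage_def Int_def
        intro: Ex_list_of_length intro!: arg_cong[where f=card])
  also have "\<dots> \<le> 1 / real CARD('f)"
    using card_zeros_of_linear_form[of i0 ?m a, OF i0] card_lists_of_length[where 'f='f and m="?m"]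
    by (simp add: field_simps flip: of_nat_mult of_nat_power)
  finally show ?thesis using prob_Collect_not[of "rand_comb vs" "\<lambda>w. dot k \<mu> w = 0"] by simp
qed

definition valid_state :: "nat \<Rightarrow> 'f::field gstate \<Rightarrow> bool" where
  "valid_state k s \<longleftrightarrow> (\<forall>x. set (s x) \<subseteq> supported_on {..<k} \<and> lin_indep (s x))"

lemma valid_state_receive:
  "valid_state k s \<Longrightarrow> m \<in> supported_on {..<k} \<Longrightarrow> valid_state k (s(b := receive (s b) m))"
  by (auto simp: valid_state_def receive_def lin_indep_snoc)

lemma valid_state_init: "valid_state k (init_state loc k :: 'f::field gstate)"
  unfolding valid_state_def
proof (intro allI conjI)
  fix x
  let ?is = "filter (\<lambda>i. loc i = x) [0..<k]"
  show "set (init_state loc k x) \<subseteq> (supported_on {..<k} :: 'f eqn set)"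
    by (auto simp: init_state_def supported_on_def unit_eqn_def)
  have "lincomb cs (map unit_eqn ?is) (?is ! l) = (cs ! l :: 'f)" if "l < length ?is" for cs l
  proof -
    have "lincomb cs (map unit_eqn ?is) (?is ! l) = (\<Sum>i<length ?is. (if i = l then cs ! l else 0))"
      unfolding lincomb_def using that
      by (intro sum.cong) (auto simp: unit_eqn_def nth_eq_iff_index_eq)
    then show ?thesis using that by simp
  qed
  then show "lin_indep (init_state loc k x :: 'f eqn list)"
    unfolding lin_indep_def init_state_def by (intro inj_onI nth_equalityI) (auto, metis)
qed

lemma init_state_knows:
  assumes "j < k" "\<mu> j \<noteq> 0"
  shows "knows k \<mu> (init_state loc k (loc j) :: 'f::field eqn list)"
proof -
  have "dot k \<mu> (unit_eqn j) = \<mu> j"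
    unfolding dot_def unit_eqn_def using assms(1) by (simp add: if_distrib cong: if_cong)
  moreover have "unit_eqn j \<in> set (init_state loc k (loc j) :: 'f eqn list)"
    using assms by (auto simp: init_state_def)
  ultimately show ?thesis using assms(2) unfolding knows_def by metis
qed

lemma not_all_done_imp_not_knows:
  assumes "valid_state k (s :: 'f::{field,finite} gstate)" "\<not> all_done V k s"
  shows "\<exists>v\<in>V. \<exists>\<mu>\<in>supported_on {..<k}. (\<exists>j<k. \<mu> j \<noteq> 0) \<and> \<not> knows k \<mu> (s v)"
proof -
  obtain v where v: "v \<in> V" "length (s v) \<noteq> k" using assms(2) by (auto simp: all_done_def)
  have "length (s v) \<le> card {..<k}"
    using assms(1) by (intro length_le_card_if_lin_indep) (auto simp: valid_state_def)
  then have "length (s v) < k" using v by simp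
  then show ?thesis using v exists_nonzero_not_known by blast
qed

lemma deliver_Cons: "deliver s ((b, m) # ms) = deliver (s(b := receive (s b) m)) ms"
  by (simp add: deliver_def)

lemma set_deliver_mono: "set (s x) \<subseteq> set (deliver s ms x)"
proof (induction ms arbitrary: s)
  case (Cons bm ms)
  obtain b m where bm: "bm = (b, m)" by force
  have "set (s x) \<subseteq> set ((s(b := receive (s b) m)) x)" by (auto simp: receive_def)
  also have "\<dots> \<subseteq> set (deliver (s(b := receive (s b) m)) ms x)" by (rule Cons.IH)
  finally show ?case by (simp add: bm deliver_Cons)
qed (simp add: deliver_def)

lemma set_deliver_subset: "set (deliver s ms x) \<subseteq> set (s x) \<union> {m. (x, m) \<in> set ms}"
proof (induction ms arbitrary: s)
  case (Cons bm ms)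
  obtain b m where bm: "bm = (b, m)" by force
  have "set (deliver (s(b := receive (s b) m)) ms x)
      \<subseteq> set ((s(b := receive (s b) m)) x) \<union> {m. (x, m) \<in> set ms}"
    by (rule Cons.IH)
  then show ?case by (auto simp: bm deliver_Cons receive_def split: if_splits)
qed (simp add: deliver_def)

lemma deliver_knows:
  "(b, m) \<in> set ms \<Longrightarrow> dot k \<mu> m \<noteq> 0 \<Longrightarrow> knows k \<mu> (deliver s ms b)"
proof (induction ms arbitrary: s)
  case (Cons bm ms)
  obtain b' m' where bm: "bm = (b', m')" by force
  show ?case
  proof (cases "(b, m) \<in> set ms")
    case False
    then have "knows k \<mu> ((s(b := receive (s b) m)) b)" using knows_receive Cons.prems by simp
    then show ?thesis using False Cons.prems knows_mono set_deliver_mono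
      by (metis bm deliver_Cons set_ConsD)
  qed (use Cons in \<open>simp add: bm deliver_Cons\<close>)
qed simp

lemma valid_state_deliver:
  "valid_state k s \<Longrightarrow> \<forall>(b, m)\<in>set ms. m \<in> supported_on {..<k} \<Longrightarrow> valid_state k (deliver s ms)"
  by (induction ms arbitrary: s) (auto simp: deliver_def valid_state_receive)

lemma length_deliver_le:
  "length (deliver s ms x) \<le> length (s x) + length (filter (\<lambda>bm. fst bm = x) ms)"
proof (induction ms arbitrary: s)
  case (Cons bm ms)
  obtain b m where bm: "bm = (b, m)" by force
  have "length (deliver s (bm # ms) x)
      \<le> length ((s(b := receive (s b) m)) x) + length (filter (\<lambda>bm. fst bm = x) ms)"
    unfolding bm deliver_Cons by (rule Cons.IH)
  then show ?case using length_receive[of "s b" m] by (auto simp: bm)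
qed (simp add: deliver_def)

lemma set_pmf_draw_msgs:
  "ms \<in> set_pmf (draw_msgs s ps) \<Longrightarrow> map fst ms = map snd ps \<and>
     (\<forall>i<length ps. snd (ms ! i) \<in> set_pmf (rand_comb (s (fst (ps ! i)))))"
proof (induction ps arbitrary: ms)
  case (Cons ab ps)
  obtain a b where ab: "ab = (a, b)" by force
  from Cons.prems obtain m ms' where m: "m \<in> set_pmf (rand_comb (s a))"
    "ms' \<in> set_pmf (draw_msgs s ps)" "ms = (b, m) # ms'" by (auto simp: ab)
  show ?case using Cons.IH[OF m(2)] m ab by (auto simp: nth_Cons split: nat.splits)
qed simp

lemma draw_msgs_sender:
  assumes "ms \<in> set_pmf (draw_msgs s ps)" "(b, m) \<in> set ms"
  obtains a where "(a, b) \<in> set ps" "m \<in> set_pmf (rand_comb (s a))"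
proof -
  obtain l where l: "l < length ms" "ms ! l = (b, m)" using assms(2) by (meson in_set_conv_nth)
  have mf: "map fst ms = map snd ps" using set_pmf_draw_msgs[OF assms(1)] by simp
  then have lp: "l < length ps" using l by (metis length_map)
  have "snd (ps ! l) = b" using arg_cong[where f="\<lambda>xs. xs ! l", OF mf] l lp by simp
  then have "(fst (ps ! l), b) \<in> set ps" using lp by (metis nth_mem prod.collapse)
  moreover have "m \<in> set_pmf (rand_comb (s (fst (ps ! l))))"
    using set_pmf_draw_msgs[OF assms(1)] lp l by force
  ultimately show ?thesis by (rule that)
qed

lemma draw_msgs_receiver:
  assumes "ms \<in> set_pmf (draw_msgs s ps)" "i < length ps"
  shows "(snd (ps ! i), snd (ms ! i)) \<in> set ms"
proof -
  have mf: "map fst ms = map snd ps" using set_pmf_draw_msgs[OF assms(1)] by simp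
  then have "i < length ms" using assms(2) by (metis length_map)
  moreover have "fst (ms ! i) = snd (ps ! i)"
    using arg_cong[where f="\<lambda>xs. xs ! i", OF mf] calculation assms(2) by simp
  ultimately show ?thesis by (metis nth_mem prod.collapse)
qed

lemma map_pmf_draw_msgs_nth:
  "i < length ps \<Longrightarrow> map_pmf (\<lambda>ms. snd (ms ! i)) (draw_msgs s ps) = rand_comb (s (fst (ps ! i)))"
proof (induction ps arbitrary: i)
  case (Cons ab ps)
  obtain a b where ab: "ab = (a, b)" by force
  show ?case
  proof (cases i)
    case 0
    then show ?thesis by (simp add: ab map_bind_pmf bind_return_pmf')
  next
    case (Suc i')
    then show ?thesis using Cons.IH[of i'] Cons.prems
      by (simp add: ab map_bind_pmf pmf.map_comp o_def map_pmf_def bind_assoc_pmf bind_return_pmf)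
  qed
qed simp

lemma length_filter_draw_msgs:
  "ms \<in> set_pmf (draw_msgs s ps) \<Longrightarrow>
     length (filter (\<lambda>bm. fst bm = v) ms) = length (filter (\<lambda>ab. snd ab = v) ps)"
proof -
  assume "ms \<in> set_pmf (draw_msgs s ps)"
  then have "map fst ms = map snd ps" using set_pmf_draw_msgs by blast
  then have "length (filter (\<lambda>x. x = v) (map fst ms)) = length (filter (\<lambda>x. x = v) (map snd ps))"
    by simp
  then show ?thesis by (simp add: filter_map o_def)
qed

lemma simple_graph_finite: "simple_graph V E \<Longrightarrow> finite V"
  by (simp add: simple_graph_def)

lemma simple_graph_edge_in: "simple_graph V E \<Longrightarrow> E a b \<Longrightarrow> a \<in> V \<and> b \<in> V"
  by (simp add: simple_graph_def)

lemma finite_nbrs: "simple_graph V E \<Longrightarrow> finite (nbrs V E v)"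
  by (auto simp: nbrs_def simple_graph_def)

lemma mem_nbrs: "simple_graph V E \<Longrightarrow> E a b \<Longrightarrow> b \<in> nbrs V E a"
  by (auto simp: nbrs_def simple_graph_def)

lemma card_nbrs_le_max_degree: "simple_graph V E \<Longrightarrow> v \<in> V \<Longrightarrow> card (nbrs V E v) \<le> max_degree V E"
  unfolding max_degree_def by (rule Max_ge) (auto simp: simple_graph_finite)

lemma walk_Cons: "walk E (a # xs) \<longleftrightarrow> xs = [] \<or> (E a (hd xs) \<and> walk E xs)"
  by (cases xs) auto

lemma walk_snoc_iff: "xs \<noteq> [] \<Longrightarrow> walk E (xs @ [v]) \<longleftrightarrow> walk E xs \<and> E (last xs) v"
  by (induction xs) (auto simp: walk_Cons)

lemma walk_append: "walk E xs \<Longrightarrow> walk E ys \<Longrightarrow> last xs = hd ys \<Longrightarrow> walk E (xs @ tl ys)"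
proof (induction xs)
  case (Cons a xs)
  show ?case
  proof (cases "xs = []")
    case True
    then have "(a # xs) @ tl ys = ys" using Cons.prems by (cases ys) auto
    then show ?thesis using Cons.prems by simp
  next
    case False
    then show ?thesis using Cons by (simp add: walk_Cons)
  qed
qed simp

lemma walk_rev: "(\<forall>u v. E u v \<longrightarrow> E v u) \<Longrightarrow> walk E xs \<Longrightarrow> walk E (rev xs)"
proof (induction xs)
  case (Cons a xs)
  show ?case
  proof (cases "xs = []")
    case False
    then have "walk E (rev xs)" "E (hd xs) a" using Cons by (auto simp: walk_Cons)
    then show ?thesis using False walk_snoc_iff[of "rev xs" E a] by (simp add: last_rev)
  qed simp
qed simp

lemma walk_nth: "walk E xs \<Longrightarrow> Suc j < length xs \<Longrightarrow> E (xs ! j) (xs ! Suc j)"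
proof (induction xs arbitrary: j)
  case (Cons a xs)
  then show ?case by (cases j) (auto simp: walk_Cons hd_conv_nth)
qed simp

definition reach :: "(nat \<Rightarrow> nat \<Rightarrow> bool) \<Rightarrow> nat \<Rightarrow> nat \<Rightarrow> nat \<Rightarrow> bool" where
  "reach E x v t \<longleftrightarrow> (\<exists>xs. walk E xs \<and> hd xs = x \<and> last xs = v \<and> length xs \<le> Suc t)"

lemma reach_0_iff: "reach E x v 0 \<longleftrightarrow> v = x"
proof
  show "reach E x v 0 \<Longrightarrow> v = x" by (auto simp: reach_def le_Suc_eq length_Suc_conv)
qed (auto simp: reach_def intro: exI[of _ "[x]"])

lemma reach_mono: "reach E x v t \<Longrightarrow> t \<le> t' \<Longrightarrow> reach E x v t'"
  unfolding reach_def by force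

lemma reach_step:
  assumes "reach E x a t" "E a v" shows "reach E x v (Suc t)"
proof -
  obtain xs where xs: "walk E xs" "hd xs = x" "last xs = a" "length xs \<le> Suc t"
    using assms(1) by (auto simp: reach_def)
  moreover have "xs \<noteq> []" using xs(1) by auto
  ultimately have "walk E (xs @ [v]) \<and> hd (xs @ [v]) = x \<and> last (xs @ [v]) = v
      \<and> length (xs @ [v]) \<le> Suc (Suc t)"
    using assms(2) walk_snoc_iff by simp
  then show ?thesis unfolding reach_def by blast
qed

lemma reach_Suc_cases:
  assumes "reach E x v (Suc t)"
  shows "reach E x v t \<or> (\<exists>a. reach E x a t \<and> E a v)"
proof -
  obtain xs where xs: "walk E xs" "hd xs = x" "last xs = v" "length xs \<le> Suc (Suc t)"
    using assms by (auto simp: reach_def)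
  show ?thesis
  proof (cases "length xs \<le> Suc t")
    case False
    obtain ys where ys: "xs = ys @ [v]" using xs(1,3) by (cases xs rule: rev_cases) auto
    then have "ys \<noteq> []" using False by auto
    then have "walk E ys" "E (last ys) v" using xs(1) ys walk_snoc_iff by blast+
    moreover have "hd ys = x" "length ys \<le> Suc t" using xs ys \<open>ys \<noteq> []\<close> by auto
    ultimately show ?thesis unfolding reach_def by blast
  qed (use xs in \<open>auto simp: reach_def\<close>)
qed

lemma reach_in_V:
  assumes G: "simple_graph V E" and x: "x \<in> V" shows "reach E x v t \<Longrightarrow> v \<in> V"
proof (induction t arbitrary: v)
  case 0 then show ?case using x by (simp add: reach_0_iff)
next
  case (Suc t) then show ?case using simple_graph_edge_in[OF G] by (blast dest: reach_Suc_cases)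
qed

lemma card_ball_le:
  assumes G: "simple_graph V E" and x: "x \<in> V" and deg: "\<And>v. v \<in> V \<Longrightarrow> card (nbrs V E v) \<le> d"
  shows "card {v. reach E x v r} \<le> (d + 1) ^ r"
proof (induction r)
  case 0 then show ?case by (simp add: reach_0_iff)
next
  case (Suc r)
  let ?B = "{v. reach E x v r}"
  have fin: "finite ?B"
    by (rule finite_subset[OF _ simple_graph_finite[OF G]]) (use reach_in_V[OF G x] in auto)
  have "{v. reach E x v (Suc r)} \<subseteq> ?B \<union> (\<Union>a\<in>?B. nbrs V E a)"
  proof
    fix v assume "v \<in> {v. reach E x v (Suc r)}"
    then have "reach E x v r \<or> (\<exists>a. reach E x a r \<and> E a v)" by (simp add: reach_Suc_cases)
    then show "v \<in> ?B \<union> (\<Union>a\<in>?B. nbrs V E a)" using mem_nbrs[OF G] by auto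
  qed
  then have "card {v. reach E x v (Suc r)} \<le> card (?B \<union> (\<Union>a\<in>?B. nbrs V E a))"
    using fin finite_nbrs[OF G] by (intro card_mono) auto
  also have "\<dots> \<le> card ?B + card (\<Union>a\<in>?B. nbrs V E a)" by (rule card_Un_le)
  also have "card (\<Union>a\<in>?B. nbrs V E a) \<le> (\<Sum>a\<in>?B. card (nbrs V E a))" by (rule card_UN_le[OF fin])
  also have "\<dots> \<le> card ?B * d"
    using sum_bounded_above[of ?B "\<lambda>a. card (nbrs V E a)" d] deg reach_in_V[OF G x] by simp
  also have "card ?B + card ?B * d \<le> (d + 1) ^ Suc r" using Suc by (simp add: add_mono mult_left_mono)
  finally show ?case by simp
qed

lemma gdist_le: "walk E xs \<Longrightarrow> hd xs = u \<Longrightarrow> last xs = v \<Longrightarrow> length xs = m + 1 \<Longrightarrow> gdist E u v \<le> m"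
  unfolding gdist_def by (rule Least_le) blast

lemma gdist_le_if_reach: "reach E x v t \<Longrightarrow> gdist E x v \<le> t"
proof -
  assume "reach E x v t"
  then obtain xs where xs: "walk E xs" "hd xs = x" "last xs = v" "length xs \<le> Suc t"
    by (auto simp: reach_def)
  have "length xs = (length xs - 1) + 1" using xs(1) by (cases xs) auto
  then have "gdist E x v \<le> length xs - 1" using gdist_le xs by blast
  then show ?thesis using xs(4) by simp
qed

lemma gdist_walk:
  assumes "connected_graph V E" "u \<in> V" "v \<in> V"
  obtains xs where "walk E xs" "hd xs = u" "last xs = v" "length xs = gdist E u v + 1"
proof -
  obtain xs where xs: "walk E xs" "hd xs = u" "last xs = v" using assms by (auto simp: connected_graph_def)
  then have "\<exists>m xs. walk E xs \<and> hd xs = u \<and> last xs = v \<and> length xs = m + 1"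
    by (intro exI[of _ "length xs - 1"] exI[of _ xs]) (cases xs, auto)
  from LeastI_ex[OF this] show ?thesis using that unfolding gdist_def by blast
qed

lemma reach_gdist:
  assumes "connected_graph V E" "u \<in> V" "v \<in> V" shows "reach E u v (gdist E u v)"
proof -
  obtain xs where "walk E xs" "hd xs = u" "last xs = v" "length xs = gdist E u v + 1"
    using gdist_walk[OF assms] .
  then show ?thesis unfolding reach_def by (intro exI[of _ xs]) simp
qed

lemma finite_gdists: "finite V \<Longrightarrow> finite {gdist E u v | u v. u \<in> V \<and> v \<in> V}"
proof -
  assume "finite V"
  have "{gdist E u v | u v. u \<in> V \<and> v \<in> V} = (\<lambda>(u, v). gdist E u v) ` (V \<times> V)" by auto
  then show ?thesis using \<open>finite V\<close> by simp
qed

lemma gdist_le_diameter: "finite V \<Longrightarrow> u \<in> V \<Longrightarrow> v \<in> V \<Longrightarrow> gdist E u v \<le> diameter V E"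
  unfolding diameter_def by (rule Max_ge) (use finite_gdists in auto)

lemma diameter_attained:
  assumes "finite V" "V \<noteq> {}"
  obtains x y where "x \<in> V" "y \<in> V" "gdist E x y = diameter V E"
proof -
  have "diameter V E \<in> {gdist E u v | u v. u \<in> V \<and> v \<in> V}"
    unfolding diameter_def using finite_gdists[OF assms(1)] assms(2) by (intro Max_in) auto
  then show ?thesis using that by auto
qed

lemma gdist_sym_le:
  assumes G: "simple_graph V E" and C: "connected_graph V E" and uv: "u \<in> V" "v \<in> V"
  shows "gdist E v u \<le> gdist E u v"
proof -
  obtain xs where xs: "walk E xs" "hd xs = u" "last xs = v" "length xs = gdist E u v + 1"
    using gdist_walk[OF C uv] .
  have "walk E (rev xs)" using walk_rev xs(1) G by (auto simp: simple_graph_def)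
  moreover have "xs \<noteq> []" using xs(1) by auto
  then have "hd (rev xs) = v" "last (rev xs) = u" using xs by (simp_all add: hd_rev last_rev)
  ultimately show ?thesis using gdist_le xs(4) by fastforce
qed

lemma gdist_triangle:
  assumes C: "connected_graph V E" and V: "x \<in> V" "y \<in> V" "z \<in> V"
  shows "gdist E x y \<le> gdist E x z + gdist E z y"
proof -
  obtain xs where xs: "walk E xs" "hd xs = x" "last xs = z" "length xs = gdist E x z + 1"
    using gdist_walk[OF C V(1,3)] .
  obtain ys where ys: "walk E ys" "hd ys = z" "last ys = y" "length ys = gdist E z y + 1"
    using gdist_walk[OF C V(3,2)] .
  have "xs \<noteq> []" "ys \<noteq> []" using xs(1) ys(1) by auto
  have "last (xs @ tl ys) = y"
  proof (cases "tl ys = []")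
    case True
    then have "ys = [z]" using ys \<open>ys \<noteq> []\<close> by (cases ys) auto
    then show ?thesis using xs ys True by simp
  next
    case False then show ?thesis using ys by (cases ys) auto
  qed
  moreover have "hd (xs @ tl ys) = x" using xs \<open>xs \<noteq> []\<close> by simp
  moreover have "walk E (xs @ tl ys)" using walk_append xs ys by simp
  ultimately show ?thesis using gdist_le[of E "xs @ tl ys"] xs ys by simp
qed

lemma card_le_pow_diameter:
  assumes G: "simple_graph V E" and C: "connected_graph V E" and x: "x \<in> V"
    and deg: "max_degree V E \<le> d"
  shows "card V \<le> (d + 1) ^ diameter V E"
proof -
  let ?B = "{v. reach E x v (diameter V E)}"
  have "V \<subseteq> ?B"
    using reach_mono[OF reach_gdist[OF C x] gdist_le_diameter[OF simple_graph_finite[OF G] x]] by blast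
  moreover have "?B \<subseteq> V" using reach_in_V[OF G x] by blast
  ultimately have "card V \<le> card ?B" using simple_graph_finite[OF G] by (intro card_mono) auto
  also have "card ?B \<le> (d + 1) ^ diameter V E"
    using card_nbrs_le_max_degree[OF G] deg by (intro card_ball_le[OF G x]) (meson order_trans)
  finally show ?thesis .
qed

abbreviation round_pairs :: "nat set \<Rightarrow> (nat \<Rightarrow> nat \<Rightarrow> bool) \<Rightarrow> (nat \<Rightarrow> nat) \<Rightarrow> (nat \<times> nat) list" where
  "round_pairs V E p \<equiv>
     concat (map (\<lambda>v. if nbrs V E v = {} then [] else [(v, p v), (p v, v)]) (sorted_list_of_set V))"

lemma set_pmf_sync_round:
  assumes "s' \<in> set_pmf (sync_round V E s)"
  obtains p ms where "p \<in> set_pmf (Pi_pmf V 0 (partner_pmf V E))"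
    "ms \<in> set_pmf (draw_msgs s (round_pairs V E p))" "s' = deliver s ms"
  using assms by (auto simp: sync_round_def)

lemma set_sync_round_mono: "s' \<in> set_pmf (sync_round V E s) \<Longrightarrow> set (s x) \<subseteq> set (s' x)"
  by (erule set_pmf_sync_round) (simp add: set_deliver_mono)

lemma valid_state_draw_msgs:
  assumes "valid_state k s" "ms \<in> set_pmf (draw_msgs s ps)"
  shows "\<forall>(b, m)\<in>set ms. m \<in> supported_on {..<k}"
proof clarify
  fix b m assume "(b, m) \<in> set ms"
  then obtain a where "m \<in> set_pmf (rand_comb (s a))" by (rule draw_msgs_sender[OF assms(2)])
  then show "m \<in> supported_on {..<k}"
    using assms(1) by (intro rand_comb_supported_on) (auto simp: valid_state_def)
qed

lemma valid_state_sync_round: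
  "valid_state k s \<Longrightarrow> s' \<in> set_pmf (sync_round V E s) \<Longrightarrow> valid_state k s'"
  by (erule set_pmf_sync_round) (simp add: valid_state_deliver valid_state_draw_msgs)

lemma partner_in_nbrs:
  assumes G: "simple_graph V E" and p: "p \<in> set_pmf (Pi_pmf V 0 (partner_pmf V E))"
    and w: "w \<in> V" "nbrs V E w \<noteq> {}"
  shows "p w \<in> nbrs V E w"
proof -
  have "p \<in> PiE_dflt V 0 (set_pmf \<circ> partner_pmf V E)"
    by (rule subsetD[OF set_Pi_pmf_subset'[OF simple_graph_finite[OF G], where dflt=0] p])
  then have "p w \<in> set_pmf (partner_pmf V E w)" using w by (auto simp: PiE_dflt_def)
  then show ?thesis using w finite_nbrs[OF G] by (simp add: partner_pmf_def)
qed

lemma round_pairs_edge: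
  assumes G: "simple_graph V E" and p: "p \<in> set_pmf (Pi_pmf V 0 (partner_pmf V E))"
    and ab: "(a, b) \<in> set (round_pairs V E p)"
  shows "E a b"
proof -
  obtain w where w: "w \<in> V" "nbrs V E w \<noteq> {}" "(a, b) = (w, p w) \<or> (a, b) = (p w, w)"
    using ab simple_graph_finite[OF G] by (auto split: if_splits)
  have "E w (p w)" using partner_in_nbrs[OF G p w(1,2)] by (simp add: nbrs_def)
  then show ?thesis using w(3) G by (auto simp: simple_graph_def)
qed

text \<open>A node receives the answer of its own partner and one message from every neighbour
  that chose it, hence at most \<Delta> + 1 messages per round.\<close>
lemma length_filter_round_pairs_le:
  assumes G: "simple_graph V E" and p: "p \<in> set_pmf (Pi_pmf V 0 (partner_pmf V E))"
    and deg: "max_degree V E \<le> d"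
  shows "length (filter (\<lambda>ab. snd ab = v) (round_pairs V E p)) \<le> d + 1"
proof -
  let ?g = "\<lambda>w. length (filter (\<lambda>ab. snd ab = v)
                 (if nbrs V E w = {} then [] else [(w, p w), (p w, w)]))"
  have "length (filter (\<lambda>ab. snd ab = v) (round_pairs V E p)) = (\<Sum>w\<in>V. ?g w)"
    using simple_graph_finite[OF G]
    by (simp add: filter_concat length_concat o_def sum_list_distinct_conv_sum_set)
  also have "\<dots> \<le> (\<Sum>w\<in>V. of_bool (w = v) + of_bool (w \<in> nbrs V E v))"
  proof (rule sum_mono)
    fix w assume w: "w \<in> V"
    have "p w = v \<Longrightarrow> nbrs V E w \<noteq> {} \<Longrightarrow> w \<in> nbrs V E v"
      using partner_in_nbrs[OF G p w] w G by (auto simp: nbrs_def simple_graph_def)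
    then show "?g w \<le> of_bool (w = v) + of_bool (w \<in> nbrs V E v)" by auto
  qed
  also have "\<dots> = card (V \<inter> {v}) + card (V \<inter> nbrs V E v)"
    using simple_graph_finite[OF G] by (simp add: sum.distrib Int_def)
  also have "\<dots> \<le> 1 + d"
  proof (intro add_mono)
    show "card (V \<inter> {v}) \<le> 1" by (simp add: card_le_Suc0_iff_eq)
    show "card (V \<inter> nbrs V E v) \<le> d"
    proof (cases "v \<in> V")
      case True
      have "card (V \<inter> nbrs V E v) \<le> card (nbrs V E v)" using finite_nbrs[OF G] by (intro card_mono) auto
      then show ?thesis using card_nbrs_le_max_degree[OF G True] deg by simp
    next
      case False
      then have "nbrs V E v = {}" using G by (auto simp: nbrs_def simple_graph_def)
      then show ?thesis by simp
    qed
  qed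
  finally show ?thesis by simp
qed

lemma prob_deliver_knows_ge:
  fixes s :: "'f::{field,finite} gstate"
  assumes ab: "(a, b) \<in> set ps" and kn: "knows k \<mu> (s a)"
  shows "1 - 1 / real CARD('f)
           \<le> measure_pmf.prob (map_pmf (deliver s) (draw_msgs s ps)) {s'. knows k \<mu> (s' b)}"
proof -
  obtain i where i: "i < length ps" "ps ! i = (a, b)" using ab by (meson in_set_conv_nth)
  have "1 - 1 / real CARD('f) \<le> measure_pmf.prob (rand_comb (s a)) {w. dot k \<mu> w \<noteq> 0}"
    by (rule prob_rand_comb_knows_ge[OF kn])
  also have "rand_comb (s a) = map_pmf (\<lambda>ms. snd (ms ! i)) (draw_msgs s ps)"
    using map_pmf_draw_msgs_nth[OF i(1), of s] i(2) by simp
  also have "measure_pmf.prob \<dots> {w. dot k \<mu> w \<noteq> 0}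
      = measure_pmf.prob (draw_msgs s ps) {ms. dot k \<mu> (snd (ms ! i)) \<noteq> 0}"
    by (simp add: vimage_def)
  also have "\<dots> \<le> measure_pmf.prob (draw_msgs s ps) {ms. knows k \<mu> (deliver s ms b)}"
    using draw_msgs_receiver[OF _ i(1)] i(2) deliver_knows
    by (intro prob_mono_on_support) fastforce
  finally show ?thesis by (simp add: vimage_def)
qed

lemma prob_sync_round_knows_ge:
  fixes s :: "'f::{field,finite} gstate"
  assumes G: "simple_graph V E" and ab: "E a b" and kn: "knows k \<mu> (s a)"
  shows "(1 - 1 / real CARD('f)) / real (card (nbrs V E a))
           \<le> measure_pmf.prob (sync_round V E s) {s'. knows k \<mu> (s' b)}"
proof -
  have a: "a \<in> V" "b \<in> nbrs V E a" using simple_graph_edge_in[OF G ab] mem_nbrs[OF G ab] by auto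
  then have Na: "nbrs V E a \<noteq> {}" by auto
  have "measure_pmf.prob (Pi_pmf V 0 (partner_pmf V E)) {p. p a = b}
      = measure_pmf.prob (map_pmf (\<lambda>p. p a) (Pi_pmf V 0 (partner_pmf V E))) {b}"
    by (simp add: vimage_def)
  also have "\<dots> = measure_pmf.prob (pmf_of_set (nbrs V E a)) {b}"
    using a Na by (simp add: Pi_pmf_component[OF simple_graph_finite[OF G]] partner_pmf_def)
  also have "\<dots> = 1 / real (card (nbrs V E a))"
    using a finite_nbrs[OF G] by (subst measure_pmf_of_set) auto
  finally have choose_b: "measure_pmf.prob (Pi_pmf V 0 (partner_pmf V E)) {p. p a = b}
      = 1 / real (card (nbrs V E a))" .
  have c: "0 \<le> 1 - 1 / real CARD('f)" using two_le_card_field[where 'f='f] by simp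
  have inner: "1 - 1 / real CARD('f) \<le> measure_pmf.prob
      (draw_msgs s (round_pairs V E p) \<bind> (\<lambda>ms. return_pmf (deliver s ms))) {s'. knows k \<mu> (s' b)}"
    if "p a = b" for p
  proof -
    have "(a, b) \<in> set (round_pairs V E p)"
      using a Na that simple_graph_finite[OF G] by (auto intro!: bexI[of _ a])
    from prob_deliver_knows_ge[where s=s, OF this kn] show ?thesis unfolding map_pmf_def .
  qed
  have "measure_pmf.prob (Pi_pmf V 0 (partner_pmf V E)) {p. p a = b} * (1 - 1 / real CARD('f))
      \<le> measure_pmf.prob (sync_round V E s) {s'. knows k \<mu> (s' b)}"
    unfolding sync_round_def by (rule prob_bind_pmf_ge[OF c]) (use inner in auto)
  then show ?thesis using choose_b by simp
qed

lemma set_pmf_async_step: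
  assumes "s' \<in> set_pmf (async_step V E s)"
  obtains "s' = s"
  | v u mv mu where "mv \<in> set_pmf (rand_comb (s v))" "mu \<in> set_pmf (rand_comb (s u))"
      "s' = s(v := receive (s v) mu, u := receive (s u) mv)"
  using assms by (auto simp: async_step_def exchange_def split: if_splits)

lemma set_async_step_mono: "s' \<in> set_pmf (async_step V E s) \<Longrightarrow> set (s x) \<subseteq> set (s' x)"
  by (erule set_pmf_async_step) (auto simp: receive_def)

lemma valid_state_async_step:
  assumes valid: "valid_state k s" and s': "s' \<in> set_pmf (async_step V E s)"
  shows "valid_state k s'"
  using s'
proof (cases rule: set_pmf_async_step)
  case (2 v u mv mu)
  have mv: "mv \<in> supported_on {..<k}" and mu: "mu \<in> supported_on {..<k}"
    using valid rand_comb_supported_on[OF _ 2(1)] rand_comb_supported_on[OF _ 2(2)]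
    by (auto simp: valid_state_def)
  show ?thesis
  proof (cases "u = v")
    case True
    then show ?thesis using 2(3) valid_state_receive[OF valid mv, of u] by simp
  next
    case False
    have "valid_state k (s(v := receive (s v) mu))" using valid_state_receive[OF valid mu] .
    from valid_state_receive[OF this mv, of u] show ?thesis using 2(3) False by simp
  qed
qed (use valid in simp)

lemma prob_async_step_knows_ge:
  fixes s :: "'f::{field,finite} gstate"
  assumes G: "simple_graph V E" and ab: "E a b" and kn: "knows k \<mu> (s a)"
  shows "(1 - 1 / real CARD('f)) / (real (card V) * real (card (nbrs V E a)))
           \<le> measure_pmf.prob (async_step V E s) {s'. knows k \<mu> (s' b)}"
proof -
  let ?q = "1 - 1 / real CARD('f)"
  have a: "a \<in> V" "b \<in> nbrs V E a" using simple_graph_edge_in[OF G ab] mem_nbrs[OF G ab] by auto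
  have q: "0 \<le> ?q" using two_le_card_field[where 'f='f] by simp
  have "measure_pmf.prob (rand_comb (s a)) {w. dot k \<mu> w \<noteq> 0} * 1
      \<le> measure_pmf.prob (exchange s a b) {s'. knows k \<mu> (s' b)}"
    unfolding exchange_def
  proof (rule prob_bind_pmf_ge)
    fix mv assume "mv \<in> {w. dot k \<mu> w \<noteq> 0}"
    then have "measure_pmf.prob (rand_comb (s b)) UNIV * 1 \<le> measure_pmf.prob (rand_comb (s b) \<bind>
        (\<lambda>mu. return_pmf (s(a := receive (s a) mu, b := receive (s b) mv)))) {s'. knows k \<mu> (s' b)}"
      using knows_receive[of k \<mu> mv "s b"] by (intro prob_bind_pmf_ge) auto
    then show "1 \<le> measure_pmf.prob (rand_comb (s b) \<bind>
        (\<lambda>mu. return_pmf (s(a := receive (s a) mu, b := receive (s b) mv)))) {s'. knows k \<mu> (s' b)}"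
      by simp
  qed simp
  then have "measure_pmf.prob (pmf_of_set (nbrs V E a)) {b} * ?q
      \<le> measure_pmf.prob (pmf_of_set (nbrs V E a) \<bind> exchange s a) {s'. knows k \<mu> (s' b)}"
    using prob_rand_comb_knows_ge[OF kn] q by (intro prob_bind_pmf_ge) auto
  then have "measure_pmf.prob (pmf_of_set V) {a} * (measure_pmf.prob (pmf_of_set (nbrs V E a)) {b} * ?q)
      \<le> measure_pmf.prob (async_step V E s) {s'. knows k \<mu> (s' b)}"
    unfolding async_step_def using a q by (intro prob_bind_pmf_ge) auto
  moreover have "measure_pmf.prob (pmf_of_set V) {a} = 1 / real (card V)"
    using a simple_graph_finite[OF G] by (subst measure_pmf_of_set) auto
  moreover have "measure_pmf.prob (pmf_of_set (nbrs V E a)) {b} = 1 / real (card (nbrs V E a))"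
    using a finite_nbrs[OF G] by (subst measure_pmf_of_set) auto
  ultimately show ?thesis by simp
qed

section \<open>Upper bound on the stopping time\<close>

locale gossip_progress =
  fixes V :: "nat set" and E :: "nat \<Rightarrow> nat \<Rightarrow> bool" and k :: nat
    and step :: "'f::{field,finite} gstate \<Rightarrow> 'f gstate pmf" and p :: real
  assumes mono: "\<And>s s' x. s' \<in> set_pmf (step s) \<Longrightarrow> set (s x) \<subseteq> set (s' x)"
    and valid: "\<And>s s'. valid_state k s \<Longrightarrow> s' \<in> set_pmf (step s) \<Longrightarrow> valid_state k s'"
    and progress: "\<And>s a b \<mu>. E a b \<Longrightarrow> knows k \<mu> (s a) \<Longrightarrow>
                     p \<le> measure_pmf.prob (step s) {s'. knows k \<mu> (s' b)}"
    and p: "0 \<le> p" "p \<le> 1"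
begin

lemma prob_not_knows_le:
  assumes G: "simple_graph V E" and C: "connected_graph V E" and v: "v \<in> V"
    and j: "j < k" "\<mu> j \<noteq> 0" "loc j \<in> V"
  shows "measure_pmf.prob (iter_pmf step (init_state loc k) m) {s. \<not> knows k \<mu> (s v)}
           \<le> (1 - p / 2) ^ m * 2 ^ diameter V E"
proof -
  obtain xs where xs: "walk E xs" "hd xs = loc j" "last xs = v" "length xs = gdist E (loc j) v + 1"
    using gdist_walk[OF C j(3) v] .
  let ?d = "gdist E (loc j) v"
  have "xs \<noteq> []" using xs(1) by auto
  then have "xs ! 0 = loc j" "xs ! ?d = v" using xs(2-4) by (simp_all add: hd_conv_nth last_conv_nth)
  then have start: "knows k \<mu> (init_state loc k (xs ! 0))"
    using init_state_knows[where loc=loc and 'f='f and j=j and k=k and \<mu>=\<mu>] j by simp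
  have "measure_pmf.prob (iter_pmf step (init_state loc k) m) {s. \<not> knows k \<mu> (s (xs ! ?d))}
      \<le> (1 - p / 2) ^ m * 2 ^ ?d"
  proof (rule prob_stage_not_reached_le[where Q="\<lambda>i s. knows k \<mu> (s (xs ! i))" and step=step
        and init="init_state loc k" and d="?d", OF _ _ start p])
    fix i s assume "i < ?d" "knows k \<mu> (s (xs ! i))"
    moreover have "E (xs ! i) (xs ! Suc i)" using walk_nth[OF xs(1)] xs(4) \<open>i < ?d\<close> by simp
    ultimately show "p \<le> measure_pmf.prob (step s) {s'. knows k \<mu> (s' (xs ! Suc i))}"
      using progress by blast
  qed (use mono knows_mono in blast)
  then have "measure_pmf.prob (iter_pmf step (init_state loc k) m) {s. \<not> knows k \<mu> (s v)}
      \<le> (1 - p / 2) ^ m * 2 ^ ?d"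
    using \<open>xs ! ?d = v\<close> by simp
  also have "\<dots> \<le> (1 - p / 2) ^ m * 2 ^ diameter V E"
    using gdist_le_diameter[OF simple_graph_finite[OF G] j(3) v] p
    by (intro mult_left_mono power_increasing) auto
  finally show ?thesis .
qed

text \<open>Union bound over the nodes and the fewer than q^k nonzero vectors \<mu>.\<close>
lemma prob_not_all_done_le:
  assumes G: "simple_graph V E" and C: "connected_graph V E" and loc: "\<forall>i<k. loc i \<in> V"
  shows "measure_pmf.prob (iter_pmf step (init_state loc k) m) {s. \<not> all_done V k s}
           \<le> real (card V) * real CARD('f) ^ k * ((1 - p / 2) ^ m * 2 ^ diameter V E)"
proof -
  let ?P = "iter_pmf step (init_state loc k) m"
  let ?M = "{\<mu> :: 'f eqn. \<mu> \<in> supported_on {..<k} \<and> (\<exists>j<k. \<mu> j \<noteq> 0)}"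
  let ?B = "(1 - p / 2) ^ m * 2 ^ diameter V E"
  let ?A = "\<lambda>(v, \<mu> :: 'f eqn). {s. \<not> knows k \<mu> (s v)}"
  have finM: "finite ?M" by (rule finite_subset[OF _ finite_supported_on[of "{..<k}"]]) auto
  have "card ?M \<le> card (supported_on {..<k} :: 'f eqn set)"
    using finite_supported_on[of "{..<k}"] by (intro card_mono) auto
  then have cardM: "real (card ?M) \<le> real CARD('f) ^ k" by (simp add: card_supported_on flip: of_nat_power)
  have reachable: "set_pmf ?P \<subseteq> {s. valid_state k s}"
    using valid_state_init valid by (intro set_pmf_iter_pmf_subset) auto
  have "measure_pmf.prob ?P {s. \<not> all_done V k s}
      \<le> measure_pmf.prob ?P (\<Union>vm\<in>V \<times> ?M. ?A vm)"
  proof (rule prob_mono_on_support)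
    fix s assume "s \<in> set_pmf ?P" "s \<in> {s. \<not> all_done V k s}"
    then have "\<exists>v\<in>V. \<exists>\<mu>\<in>supported_on {..<k}. (\<exists>j<k. \<mu> j \<noteq> 0) \<and> \<not> knows k \<mu> (s v)"
      using reachable by (intro not_all_done_imp_not_knows) auto
    then show "s \<in> (\<Union>vm\<in>V \<times> ?M. ?A vm)" by blast
  qed
  also have "\<dots> \<le> (\<Sum>vm\<in>V \<times> ?M. measure_pmf.prob ?P (?A vm))"
    by (rule measure_pmf.finite_measure_subadditive_finite) (use simple_graph_finite[OF G] finM in auto)
  also have "\<dots> \<le> (\<Sum>vm\<in>V \<times> ?M. ?B)"
  proof (rule sum_mono, clarify)
    fix v and \<mu> :: "'f eqn" and j assume "v \<in> V" "\<mu> \<in> supported_on {..<k}" "j < k" "\<mu> j \<noteq> 0"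
    then show "measure_pmf.prob ?P {s. \<not> knows k \<mu> (s v)} \<le> ?B"
      using loc by (intro prob_not_knows_le[OF G C]) auto
  qed
  also have "\<dots> = real (card V) * real (card ?M) * ?B" by (simp add: card_cartesian_product)
  also have "\<dots> \<le> real (card V) * real CARD('f) ^ k * ?B"
    using cardM p by (intro mult_right_mono mult_left_mono) auto
  finally show ?thesis .
qed

end

text \<open>rate d bounds half the probability (1 - 1/q)/(d + 1) that knowledge crosses a given edge in one
  round; upper_const is chosen such that exp (- rate d * T) absorbs the factor
  n q^k 2^D \<le> (d + 1)^(2D) q^k 2^D / n of the union bound.\<close>
definition rate :: "nat \<Rightarrow> real" where
  "rate d = 1 / (4 * (real d + 1))"

definition upper_const :: "nat \<Rightarrow> nat \<Rightarrow> real" where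
  "upper_const d q = (2 * ln (real d + 1) + ln 2 + ln (real q)) / rate d"

lemma rate_pos: "0 < rate d"
  by (simp add: rate_def)

lemma upper_const_pos: "2 \<le> q \<Longrightarrow> 0 < upper_const d q"
  by (simp add: upper_const_def rate_def add_nonneg_pos)

lemma union_bound_le:
  fixes n q T :: real
  assumes n: "1 \<le> n" "n \<le> (real d + 1) ^ D" and q: "2 \<le> q"
    and T: "(2 * ln (real d + 1) + ln 2 + ln q) * real (k + D) \<le> a * T + a"
  shows "n * q ^ k * (exp (- (a * T)) * 2 ^ D) \<le> exp a / n"
proof -
  have e1: "(real d + 1) ^ D = exp (real D * ln (real d + 1))" by (simp add: exp_of_nat_mult)
  have e2: "q ^ k = exp (real k * ln q)" using q by (simp add: exp_of_nat_mult)
  have e3: "(2::real) ^ D = exp (real D * ln 2)" by (simp add: exp_of_nat_mult)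
  have "n * q ^ k * (exp (- (a * T)) * 2 ^ D) * n = (n * n) * q ^ k * exp (- (a * T)) * 2 ^ D"
    by (simp add: mult_ac)
  also have "\<dots> \<le> ((real d + 1) ^ D * (real d + 1) ^ D) * q ^ k * exp (- (a * T)) * 2 ^ D"
    using n q by (intro mult_right_mono mult_mono) auto
  also have "\<dots> = exp (real D * ln (real d + 1)) * exp (real D * ln (real d + 1)) * exp (real k * ln q)
      * exp (- (a * T)) * exp (real D * ln 2)"
    by (simp only: e1 e2 e3)
  also have "\<dots> = exp (2 * real D * ln (real d + 1) + real k * ln q + real D * ln 2 - a * T)"
    by (simp add: exp_add[symmetric] algebra_simps)
  also have "\<dots> \<le> exp a"
  proof -
    have "0 \<le> real D * ln q" "0 \<le> real k * ln 2" "0 \<le> real k * (2 * ln (1 + real d))" using q by auto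
    then show ?thesis using T by (simp add: algebra_simps, linarith)
  qed
  finally show ?thesis using n by (simp add: field_simps)
qed

lemma (in gossip_progress) prob_traj_all_done_ge:
  assumes G: "simple_graph V E" and C: "connected_graph V E" and Vne: "V \<noteq> {}"
    and loc: "\<forall>i<k. loc i \<in> V" and deg: "max_degree V E \<le> d"
    and T: "upper_const d CARD('f) * real (k + diameter V E) - 1 \<le> T"
    and m: "rate d * T \<le> p / 2 * real m"
  shows "1 - exp (rate d) / real (card V)
           \<le> measure_pmf.prob (traj step (init_state loc k) m) {xs. \<exists>i<length xs. all_done V k (xs ! i)}"
proof -
  let ?P = "measure_pmf.prob (iter_pmf step (init_state loc k) m) {s. \<not> all_done V k s}"
  let ?n = "real (card V)" and ?D = "diameter V E" and ?q = "real CARD('f)"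
  obtain x where x: "x \<in> V" using Vne by blast
  have "card V \<le> (d + 1) ^ ?D" by (rule card_le_pow_diameter[OF G C x deg])
  then have "?n \<le> real ((d + 1) ^ ?D)" by (simp only: of_nat_le_iff)
  moreover have "0 < card V" using x simple_graph_finite[OF G] by (auto simp: card_gt_0_iff)
  ultimately have n: "1 \<le> ?n" "?n \<le> (real d + 1) ^ ?D" by (simp_all add: add.commute)
  have "(1 - p / 2) ^ m \<le> exp (- (p / 2)) ^ m"
    using p exp_ge_add_one_self[of "- (p / 2)"] by (intro power_mono) auto
  also have "\<dots> = exp (real m * - (p / 2))" by (rule exp_of_nat_mult[symmetric])
  also have "\<dots> \<le> exp (- (rate d * T))" using m by (simp add: mult.commute)
  finally have "?n * ?q ^ k * ((1 - p / 2) ^ m * 2 ^ ?D) \<le> ?n * ?q ^ k * (exp (- (rate d * T)) * 2 ^ ?D)"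
    by (intro mult_left_mono mult_right_mono) auto
  then have "?P \<le> ?n * ?q ^ k * (exp (- (rate d * T)) * 2 ^ ?D)"
    using prob_not_all_done_le[OF G C loc, of m] by linarith
  also have "\<dots> \<le> exp (rate d) / ?n"
  proof (rule union_bound_le[OF n])
    show "2 \<le> ?q" using two_le_card_field[where 'f='f] by simp
    have "(2 * ln (real d + 1) + ln 2 + ln ?q) * real (k + ?D)
        = rate d * (upper_const d CARD('f) * real (k + ?D))"
      using rate_pos[of d] by (simp add: upper_const_def)
    also have "\<dots> \<le> rate d * (T + 1)" using T rate_pos[of d] by (intro mult_left_mono) auto
    finally show "(2 * ln (real d + 1) + ln 2 + ln ?q) * real (k + ?D) \<le> rate d * T + rate d"
      by (simp add: algebra_simps)
  qed
  finally show ?thesis using prob_traj_reaches_ge[of step "init_state loc k" m "all_done V k"] by linarith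
qed

section \<open>Lower bound on the stopping time\<close>

definition round_inv :: "(nat \<Rightarrow> nat \<Rightarrow> bool) \<Rightarrow> nat \<Rightarrow> (nat \<Rightarrow> nat) \<Rightarrow> nat \<Rightarrow> nat \<Rightarrow> 'f::field gstate \<Rightarrow> bool" where
  "round_inv E k loc d i s \<longleftrightarrow> valid_state k s \<and>
     (\<forall>v. length (s v) \<le> length (init_state loc k v :: 'f eqn list) + i * (d + 1)) \<and>
     (\<forall>v. \<forall>w\<in>set (s v). \<forall>j<k. w j \<noteq> 0 \<longrightarrow> reach E (loc j) v i)"

lemma round_inv_init: "round_inv E k loc d 0 (init_state loc k :: 'f::field gstate)"
  unfolding round_inv_def
proof (intro conjI)
  show "\<forall>v. \<forall>w\<in>set (init_state loc k v :: 'f eqn list). \<forall>j<k. w j \<noteq> 0 \<longrightarrow> reach E (loc j) v 0"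
    by (auto simp: init_state_def unit_eqn_def reach_0_iff split: if_splits)
qed (simp_all add: valid_state_init)

lemma length_sync_round_le:
  assumes G: "simple_graph V E" and deg: "max_degree V E \<le> d"
    and s': "s' \<in> set_pmf (sync_round V E s)"
  shows "length (s' v) \<le> length (s v) + (d + 1)"
  using s'
proof (cases rule: set_pmf_sync_round)
  case (1 p ms)
  then show ?thesis
    using length_deliver_le[of s ms v] length_filter_draw_msgs[OF 1(2), of v]
      length_filter_round_pairs_le[OF G 1(1) deg, of v] by simp
qed

lemma nonzero_coord_sync_round:
  fixes s :: "'f::{field,finite} gstate"
  assumes G: "simple_graph V E" and s': "s' \<in> set_pmf (sync_round V E s)"
    and w: "w \<in> set (s' v)" "w j \<noteq> 0"
  shows "(\<exists>w'\<in>set (s v). w' j \<noteq> 0) \<or> (\<exists>a. E a v \<and> (\<exists>w'\<in>set (s a). w' j \<noteq> 0))"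
  using s'
proof (cases rule: set_pmf_sync_round)
  case (1 p ms)
  have "w \<in> set (s v) \<or> (v, w) \<in> set ms" using set_deliver_subset[of s ms v] w(1) 1(3) by auto
  moreover have "\<exists>a. E a v \<and> (\<exists>w'\<in>set (s a). w' j \<noteq> 0)" if vw: "(v, w) \<in> set ms"
  proof -
    obtain a where a: "(a, v) \<in> set (round_pairs V E p)" "w \<in> set_pmf (rand_comb (s a))"
      using draw_msgs_sender[OF 1(2) vw] .
    then obtain cs where "w = lincomb cs (s a)" by (auto simp: set_pmf_rand_comb)
    then show ?thesis using lincomb_nonzero_coord w(2) round_pairs_edge[OF G 1(1) a(1)] by blast
  qed
  ultimately show ?thesis using w(2) by blast
qed

lemma round_inv_sync_round:
  fixes s :: "'f::{field,finite} gstate"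
  assumes G: "simple_graph V E" and deg: "max_degree V E \<le> d"
    and inv: "round_inv E k loc d i s" and s': "s' \<in> set_pmf (sync_round V E s)"
  shows "round_inv E k loc d (Suc i) s'"
  unfolding round_inv_def
proof (intro conjI allI ballI impI)
  show "valid_state k s'" using valid_state_sync_round inv s' by (auto simp: round_inv_def)
  show "length (s' v) \<le> length (init_state loc k v :: 'f eqn list) + Suc i * (d + 1)" for v
  proof -
    have "length (s v) \<le> length (init_state loc k v :: 'f eqn list) + i * (d + 1)"
      using inv by (simp add: round_inv_def)
    then show ?thesis using length_sync_round_le[OF G deg s', of v] by simp
  qed
  show "reach E (loc j) v (Suc i)" if w: "w \<in> set (s' v)" "j < k" "w j \<noteq> 0" for v w j
  proof -
    have R: "reach E (loc j) u i" if "w' \<in> set (s u)" "w' j \<noteq> 0" for u w'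
      using inv that \<open>j < k\<close> by (auto simp: round_inv_def)
    consider (here) w' where "w' \<in> set (s v)" "w' j \<noteq> 0"
      | (nbr) a w' where "E a v" "w' \<in> set (s a)" "w' j \<noteq> 0"
      using nonzero_coord_sync_round[OF G s' w(1,3)] by blast
    then show ?thesis
    proof cases
      case here then show ?thesis using reach_mono[OF R[OF here]] by simp
    next
      case nbr show ?thesis by (rule reach_step[OF R[OF nbr(2,3)] nbr(1)])
    qed
  qed
qed

text \<open>Two distinct nodes share the k initial messages, so one of them starts with at most k/2.\<close>
lemma not_all_done_if_few_received:
  assumes V: "finite V" "2 \<le> card V"
    and len: "\<forall>v. length (s v) \<le> length (init_state loc k v :: 'f::field eqn list) + r"
    and r: "2 * r < k"
  shows "\<not> all_done V k s"
proof
  assume "all_done V k s"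
  obtain a b where ab: "a \<in> V" "b \<in> V" "a \<noteq> b"
    using V card_le_Suc0_iff_eq[OF V(1)] by fastforce
  have "length (filter (\<lambda>i. loc i = a) [0..<k]) + length (filter (\<lambda>i. loc i = b) [0..<k]) \<le> k"
    using ab(3) by (induction k) auto
  then have "length (s a) + length (s b) < 2 * k"
    using len[rule_format, of a] len[rule_format, of b] r by (simp add: init_state_def)
  then show False using \<open>all_done V k s\<close> ab by (simp add: all_done_def)
qed

text \<open>Equations at a node farther than i from the origin of x_0 do not involve x_0.\<close>
lemma not_all_done_if_far:
  fixes s :: "'f::{field,finite} gstate"
  assumes G: "simple_graph V E" and C: "connected_graph V E" and V: "V \<noteq> {}"
    and k: "0 < k" "loc 0 \<in> V" and inv: "round_inv E k loc d i s" and i: "2 * i < diameter V E"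
  shows "\<not> all_done V k s"
proof
  assume "all_done V k s"
  obtain x y where xy: "x \<in> V" "y \<in> V" "gdist E x y = diameter V E"
    using diameter_attained[OF simple_graph_finite[OF G] V] .
  have "diameter V E \<le> gdist E (loc 0) x + gdist E (loc 0) y"
    using gdist_triangle[OF C xy(1,2) k(2)] gdist_sym_le[OF G C k(2) xy(1)] xy(3) by simp
  then have "i < gdist E (loc 0) x \<or> i < gdist E (loc 0) y" using i by linarith
  then obtain v where v: "v \<in> V" "i < gdist E (loc 0) v" using xy(1,2) by blast
  then have "\<not> reach E (loc 0) v i" using gdist_le_if_reach by fastforce
  then have "set (s v) \<subseteq> supported_on ({..<k} - {0})"
    using inv k(1) by (force simp: round_inv_def valid_state_def supported_on_def)
  moreover have "lin_indep (s v)" using inv by (simp add: round_inv_def valid_state_def)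
  ultimately have "length (s v) \<le> card ({..<k} - {0})" by (intro length_le_card_if_lin_indep) auto
  then show False using \<open>all_done V k s\<close> v k(1) by (simp add: all_done_def)
qed

lemma not_all_done_sync_traj:
  fixes s0 :: "'f::{field,finite} gstate"
  assumes G: "simple_graph V E" and C: "connected_graph V E" and n: "2 \<le> card V"
    and k: "1 \<le> k" and loc: "\<forall>i<k. loc i \<in> V" and deg: "max_degree V E \<le> d"
    and xs: "xs \<in> set_pmf (traj (sync_round V E) (init_state loc k) m)" and i: "i < length xs"
    and early: "real i < rate d * real (k + diameter V E)"
  shows "\<not> all_done V k (xs ! i)"
proof -
  have inv: "round_inv E k loc d i (xs ! i)"
    using traj_nth_invariant[where P="round_inv E k loc d", OF round_inv_init _ xs i]
      round_inv_sync_round[OF G deg] by blast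
  have "real i * 4 + real d * (real i * 4) < real k + real (diameter V E)"
    using early by (simp add: rate_def field_simps)
  moreover have "0 \<le> real d * real i" by simp
  ultimately have "real (2 * i * (d + 1)) < k \<or> real (2 * i) < diameter V E"
    by (simp add: algebra_simps, linarith)
  then show ?thesis
  proof
    assume "real (2 * i * (d + 1)) < k"
    then have "2 * (i * (d + 1)) < k" by (simp only: of_nat_less_iff mult.assoc)
    then show ?thesis using inv n simple_graph_finite[OF G]
      by (intro not_all_done_if_few_received[where r="i * (d + 1)"]) (auto simp: round_inv_def)
  next
    assume "real (2 * i) < diameter V E"
    then show ?thesis using inv n k loc by (intro not_all_done_if_far[OF G C]) auto
  qed
qed

lemma real_nat_floor_ge: "0 \<le> x \<Longrightarrow> x - 1 \<le> real (nat \<lfloor>x\<rfloor>)"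
proof -
  assume "0 \<le> x"
  then have "real (nat \<lfloor>x\<rfloor>) = real_of_int \<lfloor>x\<rfloor>" by simp
  then show ?thesis by linarith
qed

lemma rate_le: "1 / 2 \<le> x \<Longrightarrow> rate d \<le> x / (real d + 1) / 2"
proof -
  assume "1 / 2 \<le> x"
  have "rate d = 1 / 2 / (real d + 1) / 2" by (simp add: rate_def)
  also have "\<dots> \<le> x / (real d + 1) / 2" using \<open>1 / 2 \<le> x\<close> by (intro divide_right_mono) auto
  finally show ?thesis .
qed

lemma card_nbrs_pos_le:
  assumes G: "simple_graph V E" and ab: "E a b" and deg: "max_degree V E \<le> d"
  shows "0 < card (nbrs V E a)" "card (nbrs V E a) \<le> d"
  using mem_nbrs[OF G ab] finite_nbrs[OF G] by (auto simp: card_gt_0_iff)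
    (use card_nbrs_le_max_degree[OF G] simple_graph_edge_in[OF G ab] deg in fastforce)

lemma prob_sync_all_done_ge:
  assumes G: "simple_graph V E" and C: "connected_graph V E" and Vne: "V \<noteq> {}"
    and loc: "\<forall>i<k. loc i \<in> V" and deg: "max_degree V E \<le> d"
  shows "1 - exp (rate d) / real (card V) \<le> measure_pmf.prob
           (traj (sync_round V E) (init_state loc k :: 'f::{field,finite} gstate)
             (nat \<lfloor>upper_const d CARD('f) * real (k + diameter V E)\<rfloor>))
           {xs. \<exists>i<length xs. all_done V k (xs ! i)}"
proof -
  let ?q = "1 - 1 / real CARD('f)"
  let ?T = "nat \<lfloor>upper_const d CARD('f) * real (k + diameter V E)\<rfloor>"
  have q: "1 / 2 \<le> ?q" "?q \<le> 1" using two_le_card_field[where 'f='f] by auto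
  interpret gossip_progress V E k "sync_round V E :: 'f gstate \<Rightarrow> 'f gstate pmf" "?q / (real d + 1)"
  proof
    fix s :: "'f gstate" and a b \<mu> assume ab: "E a b" and kn: "knows k \<mu> (s a)"
    have "?q / (real d + 1) \<le> ?q / real (card (nbrs V E a))"
      using card_nbrs_pos_le[OF G ab deg] q by (intro divide_left_mono) auto
    also have "\<dots> \<le> measure_pmf.prob (sync_round V E s) {s'. knows k \<mu> (s' b)}"
      by (rule prob_sync_round_knows_ge[where s=s, OF G ab kn])
    finally show "?q / (real d + 1) \<le> measure_pmf.prob (sync_round V E s) {s'. knows k \<mu> (s' b)}" .
  next
    show "\<And>s s' x. s' \<in> set_pmf (sync_round V E s) \<Longrightarrow> set (s x) \<subseteq> set (s' x)"
      by (rule set_sync_round_mono)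
    show "\<And>s s'. valid_state k s \<Longrightarrow> s' \<in> set_pmf (sync_round V E s) \<Longrightarrow> valid_state k s'"
      by (rule valid_state_sync_round)
    show "0 \<le> ?q / (real d + 1)" using q by simp
    have "?q / (real d + 1) \<le> 1 / 1" using q by (intro frac_le) auto
    then show "?q / (real d + 1) \<le> 1" by simp
  qed
  show ?thesis
  proof (rule prob_traj_all_done_ge[OF G C Vne loc deg])
    have "0 \<le> upper_const d CARD('f)"
      by (rule less_imp_le[OF upper_const_pos[OF two_le_card_field[where 'f='f]]])
    then show "upper_const d CARD('f) * real (k + diameter V E) - 1 \<le> real ?T"
      by (intro real_nat_floor_ge) simp
    have "rate d \<le> ?q / (real d + 1) / 2" using q(1) by (rule rate_le)
    then show "rate d * real ?T \<le> ?q / (real d + 1) / 2 * real ?T" by (rule mult_right_mono) simp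
  qed
qed

lemma prob_async_all_done_ge:
  assumes G: "simple_graph V E" and C: "connected_graph V E" and Vne: "V \<noteq> {}"
    and loc: "\<forall>i<k. loc i \<in> V" and deg: "max_degree V E \<le> d"
  shows "1 - exp (rate d) / real (card V) \<le> measure_pmf.prob
           (traj (async_step V E) (init_state loc k :: 'f::{field,finite} gstate)
             (nat \<lfloor>upper_const d CARD('f) * real (k + diameter V E)\<rfloor> * card V))
           {xs. \<exists>i<length xs. all_done V k (xs ! i)}"
proof -
  let ?q = "1 - 1 / real CARD('f)" and ?n = "real (card V)"
  let ?T = "nat \<lfloor>upper_const d CARD('f) * real (k + diameter V E)\<rfloor>"
  have q: "1 / 2 \<le> ?q" "?q \<le> 1" using two_le_card_field[where 'f='f] by auto
  have n: "1 \<le> ?n" using Vne simple_graph_finite[OF G] by (simp add: Suc_le_eq card_gt_0_iff)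
  interpret gossip_progress V E k "async_step V E :: 'f gstate \<Rightarrow> 'f gstate pmf" "?q / (?n * (real d + 1))"
  proof
    fix s :: "'f gstate" and a b \<mu> assume ab: "E a b" and kn: "knows k \<mu> (s a)"
    have "?q / (?n * (real d + 1)) \<le> ?q / (?n * real (card (nbrs V E a)))"
      using card_nbrs_pos_le[OF G ab deg] q n by (intro divide_left_mono mult_left_mono) auto
    also have "\<dots> \<le> measure_pmf.prob (async_step V E s) {s'. knows k \<mu> (s' b)}"
      by (rule prob_async_step_knows_ge[where s=s, OF G ab kn])
    finally show "?q / (?n * (real d + 1)) \<le> measure_pmf.prob (async_step V E s) {s'. knows k \<mu> (s' b)}" .
  next
    have "?n \<le> ?n * (real d + 1)" using n by (simp add: algebra_simps)
    then have "?q \<le> ?n * (real d + 1)" using q n by linarith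
    moreover have "0 < ?n * (real d + 1)" using n by simp
    ultimately show "?q / (?n * (real d + 1)) \<le> 1" by (simp add: pos_divide_le_eq)
  next
    show "\<And>s s' x. s' \<in> set_pmf (async_step V E s) \<Longrightarrow> set (s x) \<subseteq> set (s' x)"
      by (rule set_async_step_mono)
    show "\<And>s s'. valid_state k s \<Longrightarrow> s' \<in> set_pmf (async_step V E s) \<Longrightarrow> valid_state k s'"
      by (rule valid_state_async_step)
  qed (use q n in auto)
  show ?thesis
  proof (rule prob_traj_all_done_ge[OF G C Vne loc deg])
    have "0 \<le> upper_const d CARD('f)"
      by (rule less_imp_le[OF upper_const_pos[OF two_le_card_field[where 'f='f]]])
    then show "upper_const d CARD('f) * real (k + diameter V E) - 1 \<le> real ?T"
      by (intro real_nat_floor_ge) simp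
    have "rate d \<le> ?q / (real d + 1) / 2" using q(1) by (rule rate_le)
    then have "rate d * real ?T \<le> ?q / (real d + 1) / 2 * real ?T" by (rule mult_right_mono) simp
    also have "\<dots> = ?q / (?n * (real d + 1)) / 2 * real (?T * card V)"
    proof -
      have "?n \<noteq> 0" using n by simp
      then have "x / (real d + 1) / 2 * t = x / (?n * (real d + 1)) / 2 * (t * ?n)" for x t :: real
        by (simp add: divide_simps)
      then show ?thesis by simp
    qed
    finally show "rate d * real ?T \<le> ?q / (?n * (real d + 1)) / 2 * real (?T * card V)" .
  qed
qed

lemma prob_sync_not_all_done_early_ge:
  assumes G: "simple_graph V E" and C: "connected_graph V E" and Vne: "V \<noteq> {}"
    and k: "1 \<le> k" and loc: "\<forall>i<k. loc i \<in> V" and deg: "max_degree V E \<le> d" and Cp: "1 \<le> Cp"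
  shows "1 - Cp / real (card V) \<le> measure_pmf.prob
           (traj (sync_round V E) (init_state loc k :: 'f::{field,finite} gstate) m)
           {xs. \<forall>i<length xs. real i < rate d * real (k + diameter V E) \<longrightarrow> \<not> all_done V k (xs ! i)}"
proof (cases "2 \<le> card V")
  case True
  have "measure_pmf.prob (traj (sync_round V E) (init_state loc k :: 'f gstate) m) UNIV
      \<le> measure_pmf.prob (traj (sync_round V E) (init_state loc k :: 'f gstate) m)
           {xs. \<forall>i<length xs. real i < rate d * real (k + diameter V E) \<longrightarrow> \<not> all_done V k (xs ! i)}"
  proof (rule prob_mono_on_support)
    fix xs assume "xs \<in> set_pmf (traj (sync_round V E) (init_state loc k :: 'f gstate) m)"
    then show "xs \<in> {xs. \<forall>i<length xs. real i < rate d * real (k + diameter V E) \<longrightarrow>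
        \<not> all_done V k (xs ! i)}"
      using not_all_done_sync_traj[OF G C True k loc deg] by blast
  qed
  moreover have "0 \<le> Cp / real (card V)" using Cp by simp
  ultimately show ?thesis by simp
next
  case False
  moreover have "0 < card V" using Vne simple_graph_finite[OF G] by (simp add: card_gt_0_iff)
  ultimately have "card V = 1" by simp
  then show ?thesis using Cp by (simp add: order_trans[OF _ measure_nonneg])
qed

lemma stopping_time_bounds:
  assumes Vne: "V \<noteq> {}" and G: "simple_graph V E" and C: "connected_graph V E"
    and deg: "max_degree V E \<le> d" and k: "1 \<le> k" and loc: "\<forall>i<k. loc i \<in> V"
  shows "let n = card V; D = diameter V E; s0 = (init_state loc k :: 'f::{field,finite} gstate) in
      measure_pmf.prob (traj (sync_round V E) s0 (nat \<lfloor>upper_const d CARD('f) * real (k + D)\<rfloor>))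
          {xs. \<exists>i<length xs. all_done V k (xs ! i)} \<ge> 1 - exp (rate d) / real n
    \<and> measure_pmf.prob (traj (sync_round V E) s0 (nat \<lceil>rate d * real (k + D)\<rceil>))
          {xs. \<forall>i<length xs. real i < rate d * real (k + D) \<longrightarrow> \<not> all_done V k (xs ! i)}
        \<ge> 1 - exp (rate d) / real n
    \<and> measure_pmf.prob (traj (async_step V E) s0 (nat \<lfloor>upper_const d CARD('f) * real (k + D)\<rfloor> * n))
          {xs. \<exists>i<length xs. all_done V k (xs ! i)} \<ge> 1 - exp (rate d) / real n"
  unfolding Let_def
  using prob_sync_all_done_ge[where 'f='f, OF G C Vne loc deg]
    prob_async_all_done_ge[where 'f='f, OF G C Vne loc deg]
    prob_sync_not_all_done_early_ge[where 'f='f, OF G C Vne k loc deg, of "exp (rate d)"] rate_pos[of d]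
  by simp

theorem theorem3:
  fixes Delta :: nat
  shows "\<exists>C c Cp :: real. C > 0 \<and> c > 0 \<and>
    (\<forall>(V :: nat set) E k loc.
       V \<noteq> {} \<and> simple_graph V E \<and> connected_graph V E \<and> max_degree V E \<le> Delta \<and>
       1 \<le> k \<and> k \<le> card V \<and> (\<forall>i<k. loc i \<in> V) \<longrightarrow>
       (let n = card V; D = diameter V E; s0 = (init_state loc k :: 'f::{field,finite} gstate) in
          measure_pmf.prob (traj (sync_round V E) s0 (nat \<lfloor>C * real (k + D)\<rfloor>))
              {xs. \<exists>i<length xs. all_done V k (xs ! i)} \<ge> 1 - Cp / real n
        \<and> measure_pmf.prob (traj (sync_round V E) s0 (nat \<lceil>c * real (k + D)\<rceil>))
              {xs. \<forall>i<length xs. real i < c * real (k + D) \<longrightarrow> \<not> all_done V k (xs ! i)} \<ge> 1 - Cp / real n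
        \<and> measure_pmf.prob (traj (async_step V E) s0 (nat \<lfloor>C * real (k + D)\<rfloor> * n))
              {xs. \<exists>i<length xs. all_done V k (xs ! i)} \<ge> 1 - Cp / real n))"
proof (rule exI[of _ "upper_const Delta CARD('f)"], rule exI[of _ "rate Delta"],
    rule exI[of _ "exp (rate Delta)"], intro conjI allI impI)
  show "0 < upper_const Delta CARD('f)" by (rule upper_const_pos[OF two_le_card_field])
  show "0 < rate Delta" by (rule rate_pos)
qed (elim conjE, rule stopping_time_bounds)

end
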